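(* Let $n\ge 3$, $X=\{1,\dots,n\}$, let $\mathcal{C}=\{C_1,\dots,C_m\}$ be a partial circular ordering with $m\ge 3$ blocks, equipped with the balanced TSP weighting $\mu$, and fix $r\ne s$. Then $|o(\mathcal{C}_{r,s})| = 2|o(\mathcal{C})|/(m-1)$, and for distinct $i,j\in X$: \[ \eta_{\mathcal{C}_{r,s}}(i,j) = \begin{cases} \frac{2|o(\mathcal{C})|}{m-1} & \text{if } i,j \text{ are consecutive in some block of } \mathcal{C},\\ \frac{2|o(\mathcal{C})|\mu(i)\mu(j)}{m-1} & \text{if } \{i,j\} \text{ has one element in } C_r \text{ and one in } C_s,\\ \frac{4|o(\mathcal{C})|\mu(i)\mu(j)}{(m-1)(m-2)} & \text{if } i\in C_t,\ j\in C_u,\ t\ne u,\ t,u\notin\{r,s\},\\ \frac{2|o(\mathcal{C})|\mu(i)\mu(j)}{(m-1)(m-2)} & \text{if one of } i,j \text{ lies in } C_r\cup C_s \text{ and the other in } C_t,\ t\notin\{r,s\},\\ 0 & \text{otherwise.} \end{cases}\]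
   Context: A circular ordering of $X$ is a listing $(x_1,\dots,x_n)$ of the elements of $X$ regarded as a cyclic arrangement (with $x_{n+1}=x_1$); two listings are identified if they differ by a rotation or a reversal. A partial circular ordering $\mathcal{C}=\{C_1,\dots,C_m\}$ is a partition of $X$ into $m$ nonempty blocks, each block equipped with a linear order (a path; a block and its reversal are regarded as the same); elements are consecutive in a block if adjacent in this path. $\hat{C}_r$ denotes the set of endpoints of the path $C_r$ ($\hat C_r=C_r$ if $|C_r|=1$, otherwise its first and last element). A circular ordering is consistent with $\mathcal{C}$ if every pair of elements consecutive in some block is adjacent in it; $o(\mathcal{C})$ is the set of such circular orderings. The balanced TSP weighting is $\mu:X\to\mathbb{R}$ with $\mu(i)=1$ if $i$ forms a singleton block, $\mu(i)=1/2$ if $i\in\hat C_r$ with $|\hat C_r|=2$, and $\mu(i)=0$ if $i$ is not an endpoint of its block. $\mathcal{C}_{r,s}$ denotes the set of partial circular orderings with $m-1$ blocks obtained from $\mathcal{C}$ by joining an endpoint of $C_r$ to an endpoint of $C_s$ (concatenating the two paths so that these endpoints become consecutive), and $o(\mathcal{C}_{r,s})$ is the set of circular orderings consistent with at least one member of $\mathcal{C}_{r,s}$. For distinct $i,j$, $\eta_{\mathcal{C}_{r,s}}(i,j)$ is the number of circular orderings in $o(\mathcal{C}_{r,s})$ in which $i$ and $j$ are adjacent. *)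

theory Defs
  imports Main "HOL-Library.Multiset" Complex_Main
begin

text \<open>A partial circular ordering of X is given as a list of blocks (index 0..m-1),
each block a nonempty list (a path); the blocks partition X.\<close>
definition partial_circ_ordering :: "'a set \<Rightarrow> 'a list list \<Rightarrow> bool" where
  "partial_circ_ordering X Cs \<longleftrightarrow>
     (\<forall>b\<in>set Cs. b \<noteq> []) \<and> distinct (concat Cs) \<and> set (concat Cs) = X"

definition consec_in_block :: "'a list \<Rightarrow> 'a \<Rightarrow> 'a \<Rightarrow> bool" where
  "consec_in_block b i j \<longleftrightarrow>
     (\<exists>k. Suc k < length b \<and> {b ! k, b ! Suc k} = {i, j})"

definition consec_in_some_block :: "'a list list \<Rightarrow> 'a \<Rightarrow> 'a \<Rightarrow> bool" where
  "consec_in_some_block Cs i j \<longleftrightarrow> (\<exists>b\<in>set Cs. consec_in_block b i j)"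

definition endpoints :: "'a list \<Rightarrow> 'a set" where
  "endpoints b = (if b = [] then {} else {hd b, last b})"

text \<open>A circular ordering is the class of a listing modulo rotation and reversal.\<close>
definition circ_class :: "'a list \<Rightarrow> 'a list set" where
  "circ_class xs = {ys. \<exists>k. ys = rotate k xs \<or> ys = rotate k (rev xs)}"

definition circ_orderings :: "'a set \<Rightarrow> 'a list set set" where
  "circ_orderings X = circ_class ` {xs. distinct xs \<and> set xs = X}"

definition adjacent_list :: "'a list \<Rightarrow> 'a \<Rightarrow> 'a \<Rightarrow> bool" where
  "adjacent_list xs i j \<longleftrightarrow>
     (\<exists>k<length xs. {xs ! k, xs ! ((k + 1) mod length xs)} = {i, j})"

definition adjacent_circ :: "'a list set \<Rightarrow> 'a \<Rightarrow> 'a \<Rightarrow> bool" where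
  "adjacent_circ c i j \<longleftrightarrow> (\<exists>xs\<in>c. adjacent_list xs i j)"

definition consistent_orderings :: "'a set \<Rightarrow> 'a list list \<Rightarrow> 'a list set set" where
  "consistent_orderings X Cs =
     {c \<in> circ_orderings X. \<forall>i j. consec_in_some_block Cs i j \<longrightarrow> adjacent_circ c i j}"

definition tsp_weight :: "'a list list \<Rightarrow> 'a \<Rightarrow> real" where
  "tsp_weight Cs i =
     (if \<exists>b\<in>set Cs. b = [i] then 1
      else if \<exists>b\<in>set Cs. i \<in> endpoints b \<and> card (endpoints b) = 2 then 1/2
      else 0)"

definition join_blocks :: "'a list list \<Rightarrow> nat \<Rightarrow> nat \<Rightarrow> 'a list list set" where
  "join_blocks Cs r s =
     {b # [Cs ! k. k \<leftarrow> [0..<length Cs], k \<noteq> r, k \<noteq> s] | b.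
        \<exists>x\<in>{Cs ! r, rev (Cs ! r)}. \<exists>y\<in>{Cs ! s, rev (Cs ! s)}. b = x @ y}"

definition consistent_orderings_join :: "'a set \<Rightarrow> 'a list list \<Rightarrow> nat \<Rightarrow> nat \<Rightarrow> 'a list set set" where
  "consistent_orderings_join X Cs r s = (\<Union>D\<in>join_blocks Cs r s. consistent_orderings X D)"

definition eta_join :: "'a set \<Rightarrow> 'a list list \<Rightarrow> nat \<Rightarrow> nat \<Rightarrow> 'a \<Rightarrow> 'a \<Rightarrow> nat" where
  "eta_join X Cs r s i j =
     card {c \<in> consistent_orderings_join X Cs r s. adjacent_circ c i j}"

end

theory Submission
  imports Defs
begin

lemma consec_in_block_mem: "consec_in_block b u v \<Longrightarrow> u \<in> set b \<and> v \<in> set b"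
  unfolding consec_in_block_def by (auto simp: doubleton_eq_iff)

lemma consec_in_block_rev [simp]: "consec_in_block (rev b) = consec_in_block b"
proof -
  have rev_imp: "consec_in_block b u v" if rc: "consec_in_block (rev b) u v" for b :: "'a list" and u v
  proof -
    obtain k where k: "Suc k < length b" "{rev b ! k, rev b ! Suc k} = {u, v}"
      using rc unfolding consec_in_block_def length_rev by blast
    define k' where "k' = length b - Suc (Suc k)"
    have "rev b ! k = b ! Suc k'" "rev b ! Suc k = b ! k'" "Suc k' < length b"
      using k(1) by (auto simp: rev_nth k'_def Suc_diff_Suc)
    then show ?thesis
      using k(2) unfolding consec_in_block_def by (metis insert_commute)
  qed
  show ?thesis
    using rev_imp[of b] rev_imp[of "rev b"] unfolding rev_rev_ident by blast
qed

lemma consec_in_block_appendD: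
  assumes "x \<noteq> []" "y \<noteq> []" "consec_in_block (x @ y) u v"
  shows "consec_in_block x u v \<or> consec_in_block y u v \<or> {u, v} = {last x, hd y}"
proof -
  obtain i where i: "Suc i < length (x @ y)" "{(x @ y) ! i, (x @ y) ! Suc i} = {u, v}"
    using assms(3) unfolding consec_in_block_def by auto
  consider "Suc i < length x" | "Suc i = length x" | "length x \<le> i" by linarith
  then show ?thesis
  proof cases
    case 1
    then show ?thesis using i unfolding consec_in_block_def by (auto simp: nth_append)
  next
    case 2
    then have "i = length x - 1" by simp
    then have "(x @ y) ! i = last x" "(x @ y) ! Suc i = hd y"
      using assms(1,2) 2 by (auto simp: nth_append last_conv_nth hd_conv_nth)
    then show ?thesis using i by auto
  next
    case 3
    then have "{y ! (i - length x), y ! Suc (i - length x)} = {u, v}" "Suc (i - length x) < length y"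
      using i by (auto simp: nth_append Suc_diff_le)
    then show ?thesis unfolding consec_in_block_def by blast
  qed
qed

lemma consec_in_block_append:
  assumes "x \<noteq> []" "y \<noteq> []"
  shows "consec_in_block (x @ y) u v \<longleftrightarrow>
    consec_in_block x u v \<or> consec_in_block y u v \<or> {u, v} = {last x, hd y}"
proof
  assume "consec_in_block (x @ y) u v"
  then show "consec_in_block x u v \<or> consec_in_block y u v \<or> {u, v} = {last x, hd y}"
    by (rule consec_in_block_appendD[OF assms])
next
  have junction: "(x @ y) ! (length x - 1) = last x" "(x @ y) ! Suc (length x - 1) = hd y"
    "Suc (length x - 1) < length (x @ y)"
    using assms by (auto simp: nth_append last_conv_nth hd_conv_nth)
  assume "consec_in_block x u v \<or> consec_in_block y u v \<or> {u, v} = {last x, hd y}"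
  then show "consec_in_block (x @ y) u v"
    unfolding consec_in_block_def
  proof (elim disjE exE conjE)
    fix i assume "Suc i < length x" "{x ! i, x ! Suc i} = {u, v}"
    then show "\<exists>k. Suc k < length (x @ y) \<and> {(x @ y) ! k, (x @ y) ! Suc k} = {u, v}"
      by (intro exI[of _ i]) (auto simp: nth_append)
  next
    fix i assume "Suc i < length y" "{y ! i, y ! Suc i} = {u, v}"
    then show "\<exists>k. Suc k < length (x @ y) \<and> {(x @ y) ! k, (x @ y) ! Suc k} = {u, v}"
      by (intro exI[of _ "length x + i"]) (auto simp: nth_append)
  next
    assume "{u, v} = {last x, hd y}"
    then show "\<exists>k. Suc k < length (x @ y) \<and> {(x @ y) ! k, (x @ y) ! Suc k} = {u, v}"
      using junction by (intro exI[of _ "length x - 1"]) simp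
  qed
qed

lemma consec_in_block_append_across:
  assumes "set x \<inter> set y = {}" "u \<in> set x" "v \<in> set y" "consec_in_block (x @ y) u v"
  shows "u = last x \<and> v = hd y"
proof -
  have "v \<notin> set x" "u \<notin> set y" using assms(1-3) by blast+
  then have "\<not> consec_in_block x u v" "\<not> consec_in_block y u v"
    using consec_in_block_mem by metis+
  moreover have "x \<noteq> []" "y \<noteq> []" using assms(2,3) by auto
  ultimately have "{u, v} = {last x, hd y}"
    using assms(4) consec_in_block_append[of x y u v] by simp
  moreover have "u \<noteq> hd y" using \<open>u \<notin> set y\<close> \<open>y \<noteq> []\<close> by auto
  ultimately show ?thesis by (auto simp: doubleton_eq_iff)
qed

lemma adjacent_list_iff:
  "adjacent_list xs i j \<longleftrightarrow> consec_in_block xs i j \<or> (xs \<noteq> [] \<and> {i, j} = {last xs, hd xs})"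
  unfolding adjacent_list_def consec_in_block_def
proof (intro iffI; elim disjE exE conjE)
  fix k assume k: "k < length xs" "{xs ! k, xs ! ((k + 1) mod length xs)} = {i, j}"
  show "(\<exists>k. Suc k < length xs \<and> {xs ! k, xs ! Suc k} = {i, j}) \<or>
      (xs \<noteq> [] \<and> {i, j} = {last xs, hd xs})"
  proof (cases "Suc k < length xs")
    case True
    then show ?thesis using k by auto
  next
    case False
    then have "Suc k = length xs" using k(1) by simp
    then have "xs \<noteq> []" "k = length xs - 1" "(k + 1) mod length xs = 0" by auto
    then have "xs ! k = last xs" "xs ! ((k + 1) mod length xs) = hd xs"
      by (simp_all add: last_conv_nth hd_conv_nth)
    then show ?thesis using k(2) \<open>xs \<noteq> []\<close> by auto
  qed
next
  fix k assume "Suc k < length xs" "{xs ! k, xs ! Suc k} = {i, j}"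
  then show "\<exists>k<length xs. {xs ! k, xs ! ((k + 1) mod length xs)} = {i, j}"
    by (intro exI[of _ k]) auto
next
  assume "xs \<noteq> []" "{i, j} = {last xs, hd xs}"
  then show "\<exists>k<length xs. {xs ! k, xs ! ((k + 1) mod length xs)} = {i, j}"
    by (intro exI[of _ "length xs - 1"]) (auto simp: last_conv_nth hd_conv_nth)
qed

lemma adjacent_list_commute: "adjacent_list xs i j = adjacent_list xs j i"
  unfolding adjacent_list_def by (auto simp: insert_commute)

lemma adjacent_list_rev [simp]: "adjacent_list (rev xs) = adjacent_list xs"
  by (intro ext) (auto simp: adjacent_list_iff hd_rev last_rev insert_commute)

lemma adjacent_list_rotate1 [simp]: "adjacent_list (rotate1 xs) = adjacent_list xs"
proof (intro ext)
  fix i j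
  show "adjacent_list (rotate1 xs) i j = adjacent_list xs i j"
  proof (cases "length xs \<le> 1")
    case False
    then obtain a ys where xs: "xs = a # ys" and ys: "ys \<noteq> []" by (cases xs) auto
    let ?rhs = "consec_in_block ys i j \<or> {i, j} = {last ys, a} \<or> {i, j} = {a, hd ys}"
    have a: "\<not> consec_in_block [a] i j" by (simp add: consec_in_block_def)
    have "adjacent_list (ys @ [a]) i j \<longleftrightarrow> ?rhs"
      using consec_in_block_append[of ys "[a]" i j] a ys by (simp add: adjacent_list_iff)
    moreover have "adjacent_list ([a] @ ys) i j \<longleftrightarrow> ?rhs"
      using consec_in_block_append[of "[a]" ys i j] a ys by (simp add: adjacent_list_iff disj_ac)
    ultimately show ?thesis by (simp add: xs)
  qed simp
qed

lemma adjacent_list_rotate [simp]: "adjacent_list (rotate k xs) = adjacent_list xs"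
  by (induction k) simp_all

lemma rotate_inverse: "rotate (length xs - k mod length xs) (rotate k xs) = xs"
proof (cases "xs = []")
  case False
  then have "k mod length xs < length xs" by simp
  then have "(length xs - k mod length xs + k) mod length xs = 0"
    by (metis le_add_diff_inverse2 less_imp_le_nat mod_add_right_eq mod_self)
  then show ?thesis by (simp add: rotate_rotate)
qed simp

lemma rev_rotate: "rev (rotate k xs) = rotate (length xs - k mod length xs) (rev xs)"
proof (cases "xs = [] \<or> k mod length xs = 0")
  case False
  then have "length xs - k mod length xs < length xs" "k mod length xs < length xs"
    by auto
  then have "length xs - (length xs - k mod length xs) mod length xs = k mod length xs"
    by simp
  then have "rotate (length xs - k mod length xs) (rev xs) = rev (rotate (k mod length xs) xs)"
    by (simp only: rotate_rev)
  also have "\<dots> = rev (rotate k xs)"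
    by (simp only: rotate_conv_mod[of k xs, symmetric])
  finally show ?thesis ..
qed (auto simp: rotate_rev)

lemma circ_class_refl: "xs \<in> circ_class xs"
  unfolding circ_class_def by (auto intro: exI[of _ 0])

lemma circ_class_rev [simp]: "circ_class (rev xs) = circ_class xs"
  unfolding circ_class_def by auto

lemma circ_class_rotate [simp]: "circ_class (rotate k xs) = circ_class xs"
proof -
  have sub: "circ_class (rotate k xs) \<subseteq> circ_class xs" for k and xs :: "'a list"
  proof
    fix ys assume "ys \<in> circ_class (rotate k xs)"
    then obtain j where "ys = rotate j (rotate k xs) \<or> ys = rotate j (rev (rotate k xs))"
      unfolding circ_class_def by blast
    then show "ys \<in> circ_class xs"
      unfolding circ_class_def rev_rotate rotate_rotate by (auto intro: exI[of _ "j + _"])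
  qed
  have "circ_class xs = circ_class (rotate (length xs - k mod length xs) (rotate k xs))"
    by (simp only: rotate_inverse)
  also have "\<dots> \<subseteq> circ_class (rotate k xs)" by (rule sub)
  finally show ?thesis using sub[of k xs] by (rule equalityI[rotated])
qed

lemma circ_class_eq: "ys \<in> circ_class xs \<Longrightarrow> circ_class ys = circ_class xs"
proof -
  assume "ys \<in> circ_class xs"
  then obtain k where "ys = rotate k xs \<or> ys = rotate k (rev xs)"
    unfolding circ_class_def by blast
  then show ?thesis by auto
qed

lemma circ_class_mem:
  "ys \<in> circ_class xs \<Longrightarrow> distinct ys = distinct xs \<and> set ys = set xs \<and> length ys = length xs"
  unfolding circ_class_def by auto

lemma adjacent_list_circ_class: "ys \<in> circ_class xs \<Longrightarrow> adjacent_list ys = adjacent_list xs"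
  unfolding circ_class_def by auto

lemma adjacent_circ_circ_class: "adjacent_circ (circ_class xs) = adjacent_list xs"
proof (intro ext iffI)
  fix i j
  assume "adjacent_circ (circ_class xs) i j"
  then obtain ys where "ys \<in> circ_class xs" "adjacent_list ys i j"
    unfolding adjacent_circ_def by blast
  then show "adjacent_list xs i j" by (simp add: adjacent_list_circ_class)
next
  fix i j
  assume "adjacent_list xs i j"
  then show "adjacent_circ (circ_class xs) i j"
    unfolding adjacent_circ_def using circ_class_refl by blast
qed

lemma Suc_pred_mod: "0 < (n::nat) \<Longrightarrow> t < n \<Longrightarrow> ((t + n - 1) mod n + 1) mod n = t"
proof (cases t)
  case 0
  assume "0 < n"
  then have "n - 1 < n" "n - 1 + 1 = n" by auto
  then show ?thesis using 0 by simp
next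
  case (Suc s)
  assume "0 < n" "t < n"
  then have "t + n - 1 = s + n" using Suc by simp
  then have "(t + n - 1) mod n = s" using Suc \<open>t < n\<close> by simp
  then show ?thesis using Suc \<open>t < n\<close> by simp
qed

lemma Suc_mod_eq_iff:
  assumes "k < (n::nat)" "t < n"
  shows "(k + 1) mod n = t \<longleftrightarrow> k = (t + n - 1) mod n"
proof
  assume h: "(k + 1) mod n = t"
  show "k = (t + n - 1) mod n"
  proof (cases "k + 1 < n")
    case True
    then have "t = k + 1" using h by simp
    then show ?thesis using True by simp
  next
    case False
    then have "k + 1 = n" using assms(1) by simp
    then show ?thesis using h by simp
  qed
next
  assume "k = (t + n - 1) mod n"
  then show "(k + 1) mod n = t" using Suc_pred_mod assms by simp
qed

lemma adjacent_list_nth_iff: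
  assumes d: "distinct xs" and t: "t < length xs"
  shows "adjacent_list xs (xs!t) v \<longleftrightarrow>
    v = xs ! ((t + 1) mod length xs) \<or> v = xs ! ((t + length xs - 1) mod length xs)"
proof -
  let ?n = "length xs" and ?p = "(t + length xs - 1) mod length xs"
  have "0 < ?n" using t by linarith
  then have lt: "(k + 1) mod ?n < ?n" "?p < ?n" for k by simp_all
  have char: "{xs!k, xs!((k + 1) mod ?n)} = {xs!t, v} \<longleftrightarrow>
      k = t \<and> v = xs!((t + 1) mod ?n) \<or> k = ?p \<and> v = xs!k" if "k < ?n" for k
    using that t lt nth_eq_iff_index_eq[OF d] Suc_mod_eq_iff[OF that t] by (auto simp: doubleton_eq_iff)
  show ?thesis
    unfolding adjacent_list_def
  proof
    assume "\<exists>k<?n. {xs!k, xs!((k + 1) mod ?n)} = {xs!t, v}"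
    then show "v = xs!((t + 1) mod ?n) \<or> v = xs!?p" using char by blast
  next
    assume "v = xs!((t + 1) mod ?n) \<or> v = xs!?p"
    then show "\<exists>k<?n. {xs!k, xs!((k + 1) mod ?n)} = {xs!t, v}"
      using char[OF t] char[OF lt(2)] t lt(2) by blast
  qed
qed

definition cyclic_path :: "'a list \<Rightarrow> 'a list \<Rightarrow> bool" where
  "cyclic_path xs L \<longleftrightarrow> (\<forall>t. Suc t < length L \<longrightarrow> adjacent_list xs (L!t) (L!Suc t))"

lemma cyclic_path_prefix_eq:
  assumes d: "distinct ys" and dL: "distinct L" and lL: "length L \<le> length ys"
    and L2: "2 \<le> length L" and h0: "ys!0 = L!0" and h1: "ys!1 = L!1" and p: "cyclic_path ys L"
  shows "take (length L) ys = L"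
proof -
  let ?n = "length ys"
  have Q: "Suc t < length L \<longrightarrow> ys!t = L!t \<and> ys!Suc t = L!Suc t" for t
  proof (induction t)
    case 0 then show ?case using h0 h1 by simp
  next
    case (Suc t)
    show ?case
    proof
      assume a: "Suc (Suc t) < length L"
      then have IH: "ys!t = L!t" "ys!Suc t = L!Suc t" using Suc by auto
      have "adjacent_list ys (L!Suc t) (L!Suc (Suc t))" using p a unfolding cyclic_path_def by blast
      then have "adjacent_list ys (ys!Suc t) (L!Suc (Suc t))" using IH by simp
      moreover have st: "Suc t < ?n" using a lL by linarith
      ultimately have "L!Suc (Suc t) = ys ! ((Suc t+1) mod ?n) \<or> L!Suc (Suc t) = ys ! ((Suc t + ?n - 1) mod ?n)"
        using adjacent_list_nth_iff[OF d st] by blast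
      moreover have "(Suc t + ?n - 1) mod ?n = t" using st by simp
      moreover have "(Suc t+1) mod ?n = Suc (Suc t)" using a lL by simp
      moreover have "L!Suc (Suc t) \<noteq> L!t" using dL a nth_eq_iff_index_eq by fastforce
      ultimately show "ys!Suc t = L!Suc t \<and> ys!Suc (Suc t) = L!Suc (Suc t)" using IH by auto
    qed
  qed
  have "ys!t = L!t" if "t < length L" for t
    using Q[of "t - 1"] that h0 by (cases t) auto
  then show ?thesis using lL by (intro nth_equalityI) auto
qed

lemma circ_class_obtain_first:
  assumes "a \<in> set xs"
  obtains ys where "ys \<in> circ_class xs" "ys!0 = a"
proof -
  obtain q where q: "q < length xs" "xs!q = a" using assms by (metis in_set_conv_nth)
  moreover have "0 < length xs" using q(1) by linarith
  ultimately have "rotate q xs ! 0 = a" by (simp add: nth_rotate)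
  moreover have "rotate q xs \<in> circ_class xs" unfolding circ_class_def by blast
  ultimately show ?thesis using that by blast
qed

lemma circ_class_obtain_adjacent_pair:
  assumes d: "distinct xs" and n: "length xs \<ge> 3" and a: "a \<in> set xs" and adj: "adjacent_list xs a b"
  obtains ys where "ys \<in> circ_class xs" "ys!0 = a" "ys!1 = b"
proof -
  let ?n = "length xs"
  obtain xs1 where x1: "xs1 \<in> circ_class xs" "xs1!0 = a" using circ_class_obtain_first[OF a] .
  have d1: "distinct xs1" "length xs1 = ?n" using circ_class_mem[OF x1(1)] d by auto
  have "adjacent_list xs1 (xs1!0) b" using adj x1 adjacent_list_circ_class by metis
  then have "b = xs1!1 \<or> b = xs1!(?n - 1)"
    using adjacent_list_nth_iff[OF d1(1), of 0 b] d1(2) n by (cases xs) auto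
  then show ?thesis
  proof
    assume "b = xs1!1"
    then show ?thesis using that x1 by blast
  next
    assume b: "b = xs1!(?n - 1)"
    define ys where "ys = rotate (?n - 1) (rev xs1)"
    have "ys \<in> circ_class xs1" unfolding ys_def circ_class_def by blast
    then have ys: "ys \<in> circ_class xs" using circ_class_eq[OF x1(1)] by blast
    have "?n - 1 + 1 = ?n" using n by simp
    then have lens: "0 < length (rev xs1)" "1 < length (rev xs1)" "?n - 1 < ?n" "(?n - 1 + 1) mod ?n = 0"
      using d1(2) n by auto
    then have "ys!0 = rev xs1 ! (?n - 1)" "ys!1 = rev xs1 ! 0"
      unfolding ys_def using d1(2) by (simp_all only: nth_rotate length_rev add_0_right mod_less)
    then have "ys!0 = a" "ys!1 = b" using lens d1(2) x1(2) b by (simp_all add: rev_nth)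
    then show ?thesis using that ys by blast
  qed
qed

lemma cyclic_path_prefix:
  assumes d: "distinct xs" and n: "length xs \<ge> 3" and dL: "distinct L" and sL: "set L \<subseteq> set xs"
    and ne: "L \<noteq> []" and p: "cyclic_path xs L"
  shows "\<exists>ys\<in>circ_class xs. take (length L) ys = L"
proof (cases "length L = 1")
  case True
  then obtain a where L: "L = [a]" by (cases L) auto
  moreover have "a \<in> set xs" using sL L by simp
  ultimately obtain ys where ys: "ys \<in> circ_class xs" "ys!0 = a"
    using circ_class_obtain_first by metis
  have "ys \<noteq> []" using circ_class_mem[OF ys(1)] n by auto
  then have "take 1 ys = [a]" using ys(2) by (cases ys) auto
  then show ?thesis using ys(1) L by auto
next
  case False
  then have L2: "2 \<le> length L" using ne by (cases L) (auto simp: Suc_le_eq)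
  then have "adjacent_list xs (L!0) (L!1)" using p unfolding cyclic_path_def by auto
  moreover have "L!0 \<in> set L" using L2 by (intro nth_mem) linarith
  then have "L!0 \<in> set xs" using sL by blast
  ultimately obtain ys where ys: "ys \<in> circ_class xs" "ys!0 = L!0" "ys!1 = L!1"
    using circ_class_obtain_adjacent_pair[OF d n] by metis
  have dy: "distinct ys" "length ys = length xs" using circ_class_mem[OF ys(1)] d by auto
  have "length L \<le> length xs" using dL d sL by (metis card_mono distinct_card finite_set)
  moreover have "cyclic_path ys L" using p adjacent_list_circ_class[OF ys(1)] unfolding cyclic_path_def by simp
  ultimately show ?thesis using cyclic_path_prefix_eq[OF dy(1) dL _ L2 ys(2,3)] dy(2) ys(1) by auto
qed

lemma cyclic_path_adjacent_imp_consec: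
  assumes d: "distinct xs" and n: "length xs \<ge> 3" and dL: "distinct L" and sL: "set L \<subseteq> set xs"
    and p: "cyclic_path xs L" and lt: "length L < length xs"
    and u: "u \<in> set L" and v: "v \<in> set L" and adj: "adjacent_list xs u v"
  shows "consec_in_block L u v"
proof -
  let ?n = "length xs"
  have ne: "L \<noteq> []" using u by auto
  obtain ys where ys: "ys \<in> circ_class xs" "take (length L) ys = L" using cyclic_path_prefix[OF d n dL sL ne p] by blast
  have dy: "distinct ys" "length ys = ?n" using ys(1) d circ_class_mem by blast+
  have adj': "adjacent_list ys u v" using adj adjacent_list_circ_class[OF ys(1)] by simp
  have nthL: "\<And>t. t < length L \<Longrightarrow> L!t = ys!t" using ys(2) by (metis nth_take)
  obtain a where a: "a < length L" "L!a = u" using u by (metis in_set_conv_nth)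
  obtain b where b: "b < length L" "L!b = v" using v by (metis in_set_conv_nth)
  have an: "a < ?n" "b < ?n" using a b lt by auto
  have ua: "u = ys!a" "v = ys!b" using a b nthL by auto
  have "0 < ?n" using an by linarith
  then have pred_lt: "(a + ?n - 1) mod ?n < ?n" "(a + 1) mod ?n < ?n" by simp_all
  have "ys!b = ys!((a + 1) mod ?n) \<or> ys!b = ys!((a + ?n - 1) mod ?n)"
    using adjacent_list_nth_iff[OF dy(1), of a v] adj' ua dy(2) an by simp
  then have "b = (a + 1) mod ?n \<or> b = (a + ?n - 1) mod ?n"
    using nth_eq_iff_index_eq[OF dy(1)] pred_lt an dy(2) by auto
  then have "b = (a + 1) mod ?n \<or> (b + 1) mod ?n = a" using Suc_mod_eq_iff[OF an(2,1)] by blast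
  moreover have "a + 1 < ?n" "b + 1 < ?n" using a b lt by auto
  ultimately have "b = Suc a \<or> a = Suc b" by auto
  then show ?thesis unfolding consec_in_block_def using a b ua
    by (auto simp: insert_commute intro: exI[of _ a] exI[of _ b])
qed

lemma cyclic_path_circ_class:
  assumes d: "distinct xs" and n: "length xs \<ge> 3" and dL: "distinct L" and sL: "set L = set xs"
    and p: "cyclic_path xs L"
  shows "circ_class L = circ_class xs"
proof -
  have ne: "L \<noteq> []" using sL n by auto
  obtain ys where ys: "ys \<in> circ_class xs" "take (length L) ys = L" using cyclic_path_prefix[OF d n dL _ ne p] sL by blast
  have "length L = length xs" using distinct_card[OF dL] distinct_card[OF d] sL by simp
  moreover have "length ys = length xs" using ys(1) circ_class_mem by blast
  ultimately have "ys = L" using ys(2) by simp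
  then show ?thesis using ys(1) circ_class_eq by blast
qed

lemma card_adjacent_list:
  assumes d: "distinct xs" and n: "length xs \<ge> 3" and u: "u \<in> set xs"
  shows "card {v. adjacent_list xs u v} = 2"
proof -
  let ?n = "length xs"
  obtain t where t: "t < ?n" "xs!t = u" using u by (metis in_set_conv_nth)
  let ?s = "(t + 1) mod ?n" and ?p = "(t + ?n - 1) mod ?n"
  have "0 < ?n" using t(1) by linarith
  then have lt: "?s < ?n" "?p < ?n" by simp_all
  have "?s \<noteq> ?p"
  proof
    assume "?s = ?p"
    then have "(?s + 1) mod ?n = t" using Suc_mod_eq_iff[OF lt(1) t(1)] by simp
    then have "(t + 2) mod ?n = t" by (simp add: mod_simps)
    then show False using t(1) n by (cases "t + 2 < ?n") (auto simp: le_mod_geq)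
  qed
  then have "xs!?s \<noteq> xs!?p" using nth_eq_iff_index_eq[OF d lt] by simp
  moreover have "{v. adjacent_list xs u v} = {xs!?s, xs!?p}"
    using adjacent_list_nth_iff[OF d t(1)] t(2) by auto
  ultimately show ?thesis by simp
qed

lemma pco_block:
  assumes "partial_circ_ordering X D" "b \<in> set D"
  shows "b \<noteq> []" "distinct b" "set b \<subseteq> X"
  using assms unfolding partial_circ_ordering_def by (auto simp: distinct_concat_iff)

lemma pco_blocks_disjoint:
  assumes "partial_circ_ordering X D" "b \<in> set D" "b' \<in> set D" "b \<noteq> b'"
  shows "set b \<inter> set b' = {}"
  using assms unfolding partial_circ_ordering_def by (auto simp: distinct_concat_iff)

lemma pco_same_block:
  assumes "partial_circ_ordering X D" "b \<in> set D" "b' \<in> set D" "i \<in> set b" "i \<in> set b'"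
  shows "b = b'"
  using pco_blocks_disjoint[OF assms(1-3)] assms(4,5) by blast

lemma pco_distinct:
  assumes "partial_circ_ordering X D"
  shows "distinct D"
proof -
  have "removeAll [] D = D" using pco_block(1)[OF assms] by (induct D) auto
  then show ?thesis using assms unfolding partial_circ_ordering_def by (metis distinct_concat_iff)
qed

lemma pco_nth_eq_iff:
  "partial_circ_ordering X D \<Longrightarrow> q < length D \<Longrightarrow> q' < length D \<Longrightarrow> D!q = D!q' \<longleftrightarrow> q = q'"
  using pco_distinct nth_eq_iff_index_eq by blast

lemma pco_finite: "partial_circ_ordering X D \<Longrightarrow> finite X"
  unfolding partial_circ_ordering_def by auto

lemma pco_obtain_block:
  assumes "partial_circ_ordering X D" "v \<in> X"
  obtains q where "q < length D" "v \<in> set (D!q)"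
proof -
  have "v \<in> set (concat D)" using assms unfolding partial_circ_ordering_def by simp
  then obtain b where "b \<in> set D" "v \<in> set b" by auto
  then show ?thesis using that by (metis in_set_conv_nth)
qed

lemma pco_block_length_less:
  assumes pco: "partial_circ_ordering X D" and D2: "2 \<le> length D" and b: "b \<in> set D"
  shows "length b < card X"
proof -
  have "card (set D) = length D" using distinct_card[OF pco_distinct[OF pco]] .
  then have "set D \<noteq> {b}" using D2 by force
  then obtain b' where b': "b' \<in> set D" "b' \<noteq> b" using b by blast
  define w where "w = hd b'"
  have w: "w \<in> set b'" using pco_block(1)[OF pco b'(1)] unfolding w_def by simp
  then have "w \<notin> set b" "w \<in> X" using pco_blocks_disjoint[OF pco b'(1) b b'(2)] pco_block(3)[OF pco b'(1)]
    by auto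
  then have "set b \<subset> X" using pco_block(3)[OF pco b] by blast
  then have "card (set b) < card X" using psubset_card_mono pco_finite[OF pco] by blast
  then show ?thesis using distinct_card[OF pco_block(2)[OF pco b]] by simp
qed

lemma consec_in_some_block_nth: "consec_in_some_block D u v \<longleftrightarrow> (\<exists>t<length D. consec_in_block (D!t) u v)"
  unfolding consec_in_some_block_def by (metis in_set_conv_nth)

lemma endpoints_subset: "endpoints b \<subseteq> set b"
  unfolding endpoints_def by auto

lemma not_endpoint_interior:
  assumes "u \<in> set b" "u \<notin> endpoints b"
  obtains t where "0 < t" "Suc t < length b" "b!t = u"
proof -
  obtain t where t: "t < length b" "b!t = u" using assms(1) by (metis in_set_conv_nth)
  have "b \<noteq> []" using assms(1) by auto
  then have "u \<noteq> b!0" "u \<noteq> b!(length b - 1)"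
    using assms(2) unfolding endpoints_def by (auto simp: hd_conv_nth last_conv_nth)
  then have "t \<noteq> 0" "t \<noteq> length b - 1" using t(2) by metis+
  then show ?thesis using t that by simp
qed

lemma circ_orderings_obtain_rep:
  assumes "c \<in> circ_orderings X"
  obtains xs where "c = circ_class xs" "distinct xs" "set xs = X" "length xs = card X"
proof -
  obtain xs where "c = circ_class xs" "distinct xs" "set xs = X"
    using assms unfolding circ_orderings_def by blast
  then show ?thesis using that distinct_card[of xs] by simp
qed

lemma finite_circ_orderings: "finite X \<Longrightarrow> finite (circ_orderings X)"
proof -
  assume f: "finite X"
  have "{xs. distinct xs \<and> set xs = X} \<subseteq> {xs. set xs \<subseteq> X \<and> length xs = card X}"
    using distinct_card by fastforce
  then have "finite {xs. distinct xs \<and> set xs = X}"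
    using finite_lists_length_eq[OF f] by (rule finite_subset)
  then show ?thesis unfolding circ_orderings_def by (rule finite_imageI)
qed

lemma consistent_orderings_subset: "consistent_orderings X D \<subseteq> circ_orderings X"
  unfolding consistent_orderings_def by auto

lemma finite_consistent_orderings: "finite X \<Longrightarrow> finite (consistent_orderings X D)"
  using finite_circ_orderings consistent_orderings_subset by (rule finite_subset[rotated])

lemma consistent_orderings_adjacent:
  "c \<in> consistent_orderings X D \<Longrightarrow> b \<in> set D \<Longrightarrow> consec_in_block b u v \<Longrightarrow> adjacent_circ c u v"
  unfolding consistent_orderings_def consec_in_some_block_def by blast

lemma adjacent_circ_commute: "adjacent_circ c u v = adjacent_circ c v u"
  unfolding adjacent_circ_def by (simp add: adjacent_list_commute[of _ u v])

lemma adjacent_circ_mem: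
  assumes "c \<in> circ_orderings X" "adjacent_circ c u v"
  shows "u \<in> X" "v \<in> X"
proof -
  obtain xs where xs: "c = circ_class xs" "set xs = X" using circ_orderings_obtain_rep[OF assms(1)] .
  then have "adjacent_list xs u v" using assms(2) by (simp add: adjacent_circ_circ_class)
  then have "u \<in> set xs \<and> v \<in> set xs"
  proof (unfold adjacent_list_iff, elim disjE conjE)
    assume "xs \<noteq> []" "{u, v} = {last xs, hd xs}"
    then show ?thesis by (metis insertCI hd_in_set last_in_set doubleton_eq_iff)
  qed (rule consec_in_block_mem)
  then show "u \<in> X" "v \<in> X" using xs(2) by auto
qed

lemma card_adjacent_circ:
  assumes "c \<in> circ_orderings X" "card X \<ge> 3" "u \<in> X"
  shows "card {v. adjacent_circ c u v} = 2"
proof -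
  obtain xs where xs: "c = circ_class xs" "distinct xs" "set xs = X" "length xs = card X"
    using circ_orderings_obtain_rep[OF assms(1)] by blast
  show ?thesis unfolding xs(1) adjacent_circ_circ_class using card_adjacent_list[of xs u] xs assms by simp
qed

lemma block_cyclic_path:
  assumes "c \<in> consistent_orderings X D" "c = circ_class xs" "b \<in> set D"
  shows "cyclic_path xs b"
  unfolding cyclic_path_def
proof (intro allI impI)
  fix t assume "Suc t < length b"
  then have "consec_in_block b (b!t) (b!Suc t)" unfolding consec_in_block_def by blast
  then show "adjacent_list xs (b!t) (b!Suc t)"
    using consistent_orderings_adjacent[OF assms(1,3)] assms(2) by (simp add: adjacent_circ_circ_class)
qed

lemma adjacent_circ_interior:
  assumes pco: "partial_circ_ordering X D" and n3: "card X \<ge> 3" and c: "c \<in> consistent_orderings X D"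
    and b: "b \<in> set D" and t: "0 < t" "Suc t < length b"
  shows "{w. adjacent_circ c (b!t) w} = {b!(t-1), b!Suc t}"
proof -
  have "b!t \<in> X" using pco_block(3)[OF pco b] t(2) by auto
  moreover have "c \<in> circ_orderings X" using consistent_orderings_subset c by blast
  ultimately have card: "card {w. adjacent_circ c (b!t) w} = 2"
    using card_adjacent_circ[OF _ n3] by blast
  have "Suc (t - 1) = t" using t(1) by simp
  then have "consec_in_block b (b!(t-1)) (b!t)" "consec_in_block b (b!t) (b!Suc t)"
    unfolding consec_in_block_def using t(2) by (metis Suc_lessD)+
  then have "adjacent_circ c (b!(t-1)) (b!t)" "adjacent_circ c (b!t) (b!Suc t)"
    using consistent_orderings_adjacent[OF c b] by blast+
  then have sub: "{b!(t-1), b!Suc t} \<subseteq> {w. adjacent_circ c (b!t) w}"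
    using adjacent_circ_commute[of c "b!(t-1)" "b!t"] by simp
  have "t - 1 < length b" "t - 1 \<noteq> Suc t" using t by auto
  then have "b!(t-1) \<noteq> b!Suc t" using pco_block(2)[OF pco b] t(2) by (simp add: nth_eq_iff_index_eq)
  then have "card {b!(t-1), b!Suc t} = 2" by simp
  moreover have "finite {w. adjacent_circ c (b!t) w}" using card by (intro card_ge_0_finite) simp
  ultimately show ?thesis using card sub by (intro card_subset_eq[symmetric]) simp_all
qed

lemma adjacent_circ_same_block:
  assumes pco: "partial_circ_ordering X D" and n3: "card X \<ge> 3" and D2: "2 \<le> length D"
    and c: "c \<in> consistent_orderings X D" and b: "b \<in> set D"
    and u: "u \<in> set b" and v: "v \<in> set b" and adj: "adjacent_circ c u v"
  shows "consec_in_block b u v"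
proof -
  obtain xs where xs: "c = circ_class xs" "distinct xs" "set xs = X" "length xs = card X"
    using circ_orderings_obtain_rep consistent_orderings_subset c by (metis subsetD)
  show ?thesis
  proof (rule cyclic_path_adjacent_imp_consec[of xs b u v])
    show "distinct xs" "3 \<le> length xs" using xs n3 by auto
    show "distinct b" "set b \<subseteq> set xs" using pco_block[OF pco b] xs(3) by auto
    show "cyclic_path xs b" using block_cyclic_path[OF c xs(1) b] .
    show "length b < length xs" using pco_block_length_less[OF pco D2 b] xs(4) by simp
    show "adjacent_list xs u v" using adj xs(1) by (simp add: adjacent_circ_circ_class)
  qed (use u v in auto)
qed

lemma adjacent_circ_other_block:
  assumes pco: "partial_circ_ordering X D" and n3: "card X \<ge> 3"
    and c: "c \<in> consistent_orderings X D" and b: "b \<in> set D" "b' \<in> set D" "b \<noteq> b'"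
    and u: "u \<in> set b" and v: "v \<in> set b'" and adj: "adjacent_circ c u v"
  shows "u \<in> endpoints b"
proof (rule ccontr)
  assume "u \<notin> endpoints b"
  with u obtain t where t: "0 < t" "Suc t < length b" "b!t = u" by (rule not_endpoint_interior)
  then have "v \<in> {b!(t-1), b!Suc t}" using adjacent_circ_interior[OF pco n3 c b(1) t(1,2)] adj by blast
  then have "v \<in> set b" using t by auto
  then show False using pco_blocks_disjoint[OF pco b] v by blast
qed

definition other_blocks :: "'a list list \<Rightarrow> nat \<Rightarrow> nat \<Rightarrow> 'a list list" where
  "other_blocks D k l = [D ! t. t \<leftarrow> [0..<length D], t \<noteq> k, t \<noteq> l]"

lemma other_blocks_map: "other_blocks D k l = map ((!) D) (filter (\<lambda>t. t \<noteq> k \<and> t \<noteq> l) [0..<length D])"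
proof -
  have "[f t. t \<leftarrow> xs, P t, Q t] = map f (filter (\<lambda>t. P t \<and> Q t) xs)" for f :: "nat \<Rightarrow> 'a list" and P Q xs
    by (induct xs) auto
  then show ?thesis unfolding other_blocks_def .
qed

lemma set_other_blocks: "set (other_blocks D k l) = (!) D ` ({0..<length D} - {k, l})"
  unfolding other_blocks_map by auto

lemma mset_other_blocks:
  assumes "k < length D" "l < length D" "k \<noteq> l"
  shows "mset D = add_mset (D!k) (add_mset (D!l) (mset (other_blocks D k l)))"
proof -
  let ?S = "{0..<length D} - {k, l}"
  have "set (filter (\<lambda>t. t \<noteq> k \<and> t \<noteq> l) [0..<length D]) = ?S" by auto
  then have "mset (filter (\<lambda>t. t \<noteq> k \<and> t \<noteq> l) [0..<length D]) = mset_set ?S"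
    by (metis distinct_filter distinct_upt mset_set_set)
  moreover have "mset_set {0..<length D} = add_mset k (add_mset l (mset_set ?S))"
  proof -
    have "{0..<length D} = insert k (insert l ?S)" using assms by auto
    then have "mset_set {0..<length D} = mset_set (insert k (insert l ?S))" by (rule arg_cong)
    then show ?thesis using assms(3) by simp
  qed
  moreover have "mset D = mset (map ((!) D) [0..<length D])"
    by (simp only: map_nth)
  ultimately show ?thesis unfolding other_blocks_map by simp
qed

lemma length_other_blocks:
  "k < length D \<Longrightarrow> l < length D \<Longrightarrow> k \<noteq> l \<Longrightarrow> length (other_blocks D k l) = length D - 2"
  using arg_cong[OF mset_other_blocks[of k D l], of size] by simp

definition join_oriented :: "'a list list \<Rightarrow> nat \<Rightarrow> nat \<Rightarrow> 'a list \<Rightarrow> 'a list \<Rightarrow> 'a list list" where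
  "join_oriented D k l x y = (x @ y) # other_blocks D k l"

definition num_orientations :: "'a list list \<Rightarrow> nat" where
  "num_orientations D = (\<Prod>b\<leftarrow>D. card {b, rev b})"

lemma hd_neq_last: "distinct b \<Longrightarrow> 2 \<le> length b \<Longrightarrow> hd b \<noteq> last b"
  by (cases b) (auto simp: last_conv_nth nth_eq_iff_index_eq)

lemma card_orientations:
  assumes "distinct b"
  shows "card {b, rev b} = (if 2 \<le> length b then 2 else 1)"
proof (cases "2 \<le> length b")
  case True
  then have "rev b \<noteq> b" using hd_neq_last[OF assms] by (metis hd_rev)
  then show ?thesis using True by simp
next
  case False
  then have "rev b = b" by (cases b) (auto simp: Suc_le_eq)
  then show ?thesis using False by simp
qed

lemma endpoints_eq_hd_image: "b \<noteq> [] \<Longrightarrow> endpoints b = hd ` {b, rev b}"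
  unfolding endpoints_def by (auto simp: hd_rev)

lemma endpoints_eq_last_image: "b \<noteq> [] \<Longrightarrow> endpoints b = last ` {b, rev b}"
  unfolding endpoints_def by (auto simp: last_rev)

lemma orientations_singleton: "\<not> 2 \<le> length b \<Longrightarrow> rev b = b"
  by (cases b) (auto simp: Suc_le_eq)

lemma inj_on_hd_orientations: "distinct b \<Longrightarrow> inj_on hd {b, rev b}"
  using hd_neq_last[of b] orientations_singleton[of b] by (cases "2 \<le> length b") (auto simp: hd_rev)

lemma inj_on_last_orientations: "distinct b \<Longrightarrow> inj_on last {b, rev b}"
  using hd_neq_last[of b] orientations_singleton[of b] by (cases "2 \<le> length b") (auto simp: last_rev)

lemma card_endpoints: "b \<noteq> [] \<Longrightarrow> distinct b \<Longrightarrow> card (endpoints b) = card {b, rev b}"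
  using card_image[OF inj_on_hd_orientations] endpoints_eq_hd_image by metis

context
  fixes X :: "'a set" and D :: "'a list list" and k l :: nat and x y :: "'a list"
  assumes pco: "partial_circ_ordering X D"
    and kl: "k < length D" "l < length D" "k \<noteq> l"
    and x: "x \<in> {D!k, rev (D!k)}" and y: "y \<in> {D!l, rev (D!l)}"
begin

lemma join_oriented_nonempty: "x \<noteq> []" "y \<noteq> []"
  using x y pco_block(1)[OF pco, of "D!k"] pco_block(1)[OF pco, of "D!l"] kl by auto

lemma mset_join_oriented:
  "mset D = add_mset (D!k) (add_mset (D!l) (mset (tl (join_oriented D k l x y))))"
  "mset (join_oriented D k l x y) = add_mset (x @ y) (mset (tl (join_oriented D k l x y)))"
  using mset_other_blocks[OF kl] unfolding join_oriented_def by simp_all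

lemma pco_join_oriented: "partial_circ_ordering X (join_oriented D k l x y)"
proof -
  have "mset x = mset (D!k)" "mset y = mset (D!l)" using x y by auto
  then have "mset (concat (join_oriented D k l x y)) = mset (concat D)"
    unfolding mset_concat sum_mset_sum_list[symmetric] mset_map mset_join_oriented by simp
  moreover have "\<forall>b\<in>set (join_oriented D k l x y). b \<noteq> []"
    using pco_block(1)[OF pco] join_oriented_nonempty
    by (auto simp: join_oriented_def set_other_blocks)
  ultimately show ?thesis
    using pco unfolding partial_circ_ordering_def by (metis mset_eq_imp_distinct_iff mset_eq_setD)
qed

lemma length_join_oriented: "length (join_oriented D k l x y) = length D - 1"
  unfolding join_oriented_def using length_other_blocks[OF kl] kl by simp

lemma set_join_oriented:
  "set (join_oriented D k l x y) = insert (x @ y) ((!) D ` ({0..<length D} - {k, l}))"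
  by (simp add: join_oriented_def set_other_blocks)

lemma num_orientations_join_oriented:
  "num_orientations (join_oriented D k l x y) * card {D!k, rev (D!k)} * card {D!l, rev (D!l)}
    = 2 * num_orientations D"
proof -
  have "distinct (x @ y)"
    using pco_block(2)[OF pco_join_oriented, of "x @ y"] by (simp add: join_oriented_def)
  moreover have "2 \<le> length (x @ y)"
    using join_oriented_nonempty by (cases x; cases y) auto
  ultimately have "card {x @ y, rev (x @ y)} = 2"
    using card_orientations[of "x @ y"] by (simp only: if_True)
  then show ?thesis
    unfolding num_orientations_def prod_mset_prod_list[symmetric] mset_map mset_join_oriented
    by simp
qed

lemma consec_in_some_block_join_oriented:
  "consec_in_some_block (join_oriented D k l x y) u v \<longleftrightarrow>
    consec_in_some_block D u v \<or> {u, v} = {last x, hd y}"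
proof -
  have "consec_in_block x = consec_in_block (D!k)" "consec_in_block y = consec_in_block (D!l)"
    using x y by auto
  then have "consec_in_some_block (join_oriented D k l x y) u v \<longleftrightarrow>
      consec_in_block (D!k) u v \<or> consec_in_block (D!l) u v \<or> {u, v} = {last x, hd y}
      \<or> (\<exists>t\<in>{0..<length D} - {k, l}. consec_in_block (D!t) u v)"
    unfolding consec_in_some_block_def set_join_oriented
    using consec_in_block_append[OF join_oriented_nonempty] by auto
  also have "\<dots> \<longleftrightarrow> consec_in_some_block D u v \<or> {u, v} = {last x, hd y}"
    unfolding consec_in_some_block_nth using kl by auto
  finally show ?thesis .
qed

lemma consistent_orderings_join_oriented:
  "consistent_orderings X (join_oriented D k l x y) =
    {c \<in> consistent_orderings X D. adjacent_circ c (last x) (hd y)}"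
proof -
  have "(\<forall>u v. {u, v} = {last x, hd y} \<longrightarrow> adjacent_circ c u v) \<longleftrightarrow> adjacent_circ c (last x) (hd y)" for c
    using adjacent_circ_commute[of c "last x" "hd y"] by (auto simp: doubleton_eq_iff)
  then show ?thesis
    unfolding consistent_orderings_def consec_in_some_block_join_oriented by blast
qed

lemma card_adjacent_join_oriented:
  assumes "2 * card (consistent_orderings X (join_oriented D k l x y))
    = F * num_orientations (join_oriented D k l x y)"
  shows "card {c \<in> consistent_orderings X D. adjacent_circ c (last x) (hd y)}
    * card {D!k, rev (D!k)} * card {D!l, rev (D!l)} = F * num_orientations D"
proof -
  have "2 * (card {c \<in> consistent_orderings X D. adjacent_circ c (last x) (hd y)}
        * card {D!k, rev (D!k)} * card {D!l, rev (D!l)})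
      = 2 * card (consistent_orderings X (join_oriented D k l x y)) * card {D!k, rev (D!k)} * card {D!l, rev (D!l)}"
    unfolding consistent_orderings_join_oriented by simp
  also have "\<dots> = F * (num_orientations (join_oriented D k l x y) * card {D!k, rev (D!k)} * card {D!l, rev (D!l)})"
    unfolding assms by (simp only: mult.assoc)
  also have "\<dots> = 2 * (F * num_orientations D)"
    unfolding num_orientations_join_oriented by simp
  finally show ?thesis by simp
qed

end

lemma consec_in_block_last_iff:
  assumes "distinct b"
  shows "consec_in_block b (last b) v \<longleftrightarrow> butlast b \<noteq> [] \<and> v = last (butlast b)"
proof (cases "butlast b = []")
  case True
  then have "length b \<le> 1" by (cases b) (auto split: if_splits)
  then show ?thesis using True unfolding consec_in_block_def by auto
next
  case False
  then have b: "b = butlast b @ [last b]" by (metis append_butlast_last_id butlast.simps(1))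
  then have "last b \<notin> set (butlast b)" using assms by (metis distinct_append not_distinct_conv_prefix)
  then have "\<not> consec_in_block (butlast b) (last b) v" "\<not> consec_in_block [last b] (last b) v"
    using consec_in_block_mem[of "butlast b" "last b" v] by (auto simp: consec_in_block_def)
  then have "consec_in_block b (last b) v \<longleftrightarrow> {last b, v} = {last (butlast b), last b}"
    using consec_in_block_append[OF False, of "[last b]" "last b" v] b by simp
  also have "\<dots> \<longleftrightarrow> v = last (butlast b)"
    using \<open>last b \<notin> set (butlast b)\<close> False by (auto simp: doubleton_eq_iff)
  finally show ?thesis using False by simp
qed

lemma card_adjacent_outside_block:
  assumes pco: "partial_circ_ordering X D" and n3: "card X \<ge> 3" and D2: "2 \<le> length D"
    and c: "c \<in> consistent_orderings X D" and b: "b \<in> set D"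
  shows "card {v. adjacent_circ c (last b) v \<and> v \<notin> set b} * card {b, rev b} = 2"
proof -
  let ?N = "{v. adjacent_circ c (last b) v}"
  have b_ne: "b \<noteq> []" and db: "distinct b" using pco_block[OF pco b] by auto
  then have lb: "last b \<in> set b" by simp
  then have "last b \<in> X" using pco_block(3)[OF pco b] by blast
  moreover have "c \<in> circ_orderings X" using consistent_orderings_subset c by blast
  ultimately have cN: "card ?N = 2" using card_adjacent_circ[OF _ n3] by blast
  then have fin: "finite ?N" by (intro card_ge_0_finite) simp
  have "v \<in> ?N \<inter> set b \<longleftrightarrow> consec_in_block b (last b) v" for v
    using adjacent_circ_same_block[OF pco n3 D2 c b lb, of v] consistent_orderings_adjacent[OF c b]
      consec_in_block_mem[of b "last b" v] by blast
  then have inside: "?N \<inter> set b = (if butlast b \<noteq> [] then {last (butlast b)} else {})"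
    using consec_in_block_last_iff[OF db] by auto
  have "{v. adjacent_circ c (last b) v \<and> v \<notin> set b} = ?N - ?N \<inter> set b" by blast
  then have "card {v. adjacent_circ c (last b) v \<and> v \<notin> set b} = 2 - card (?N \<inter> set b)"
    using card_Diff_subset[OF _ Int_lower1] fin cN by (metis finite_Int)
  moreover have "butlast b \<noteq> [] \<longleftrightarrow> 2 \<le> length b" using b_ne by (cases b) (auto simp: Suc_le_eq)
  ultimately show ?thesis using inside card_orientations[OF db] by auto
qed

lemma adjacent_outside_first_block:
  assumes pco: "partial_circ_ordering X D" and n3: "card X \<ge> 3"
    and c: "c \<in> consistent_orderings X D" and D0: "0 < length D"
  shows "{v. adjacent_circ c (last (D!0)) v \<and> v \<notin> set (D!0)} =
    {v \<in> (\<Union>q\<in>{1..<length D}. endpoints (D!q)). adjacent_circ c (last (D!0)) v}"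
proof (intro equalityI subsetI)
  fix v assume "v \<in> {v. adjacent_circ c (last (D!0)) v \<and> v \<notin> set (D!0)}"
  then have adj: "adjacent_circ c v (last (D!0))" and v0: "v \<notin> set (D!0)"
    using adjacent_circ_commute[of c v] by auto
  have "c \<in> circ_orderings X" using consistent_orderings_subset c by blast
  then have "v \<in> X" using adjacent_circ_mem(1)[OF _ adj] by blast
  then obtain q where q: "q < length D" "v \<in> set (D!q)" using pco_obtain_block[OF pco] by blast
  then have "q \<noteq> 0" using v0 by (metis)
  then have "D!q \<noteq> D!0" using pco_nth_eq_iff[OF pco q(1) D0] by blast
  moreover have "last (D!0) \<in> set (D!0)" using pco_block(1)[OF pco] D0 by simp
  ultimately have "v \<in> endpoints (D!q)"
    using adjacent_circ_other_block[OF pco n3 c _ _ _ q(2) _ adj, of "D!0"] q(1) D0 by simp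
  then show "v \<in> {v \<in> (\<Union>q\<in>{1..<length D}. endpoints (D!q)). adjacent_circ c (last (D!0)) v}"
    using q(1) \<open>q \<noteq> 0\<close> adj adjacent_circ_commute[of c v] by auto
next
  fix v assume v: "v \<in> {v \<in> (\<Union>q\<in>{1..<length D}. endpoints (D!q)). adjacent_circ c (last (D!0)) v}"
  then obtain q where q: "0 < q" "q < length D" "v \<in> endpoints (D!q)"
    by (auto simp: Suc_le_eq)
  then have "v \<in> set (D!q)" using endpoints_subset[of "D!q"] by blast
  moreover have "set (D!q) \<inter> set (D!0) = {}"
    using pco_blocks_disjoint[OF pco, of "D!q" "D!0"] pco_nth_eq_iff[OF pco q(2) D0] q(1,2) D0 by simp
  ultimately show "v \<in> {v. adjacent_circ c (last (D!0)) v \<and> v \<notin> set (D!0)}"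
    using v by blast
qed

lemma consistent_orderings_single_block:
  assumes pco: "partial_circ_ordering X [b]" and n3: "card X \<ge> 3"
  shows "consistent_orderings X [b] = {circ_class b}"
proof
  have sb: "set b = X" and db: "distinct b" using pco unfolding partial_circ_ordering_def by auto
  show "consistent_orderings X [b] \<subseteq> {circ_class b}"
  proof
    fix c assume c: "c \<in> consistent_orderings X [b]"
    then have "c \<in> circ_orderings X" using consistent_orderings_subset by blast
    then obtain xs where xs: "c = circ_class xs" "distinct xs" "set xs = X" "length xs = card X"
      by (rule circ_orderings_obtain_rep)
    have "cyclic_path xs b" using block_cyclic_path[OF c xs(1)] by simp
    then have "circ_class b = circ_class xs" using cyclic_path_circ_class[OF xs(2) _ db] xs n3 sb by simp
    then show "c \<in> {circ_class b}" using xs(1) by simp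
  qed
  have "circ_class b \<in> circ_orderings X" unfolding circ_orderings_def using db sb by blast
  moreover have "adjacent_circ (circ_class b) u v" if "consec_in_some_block [b] u v" for u v
    using that by (simp add: consec_in_some_block_def adjacent_circ_circ_class adjacent_list_iff)
  ultimately show "{circ_class b} \<subseteq> consistent_orderings X [b]"
    unfolding consistent_orderings_def by blast
qed

lemma sum_card_swap:
  assumes "finite A" "finite B"
  shows "(\<Sum>y\<in>B. card {x\<in>A. R x y}) = (\<Sum>x\<in>A. card {y\<in>B. R x y})"
proof -
  have "card {x\<in>A. R x y} = (\<Sum>x\<in>A. of_bool (R x y))" for y
    using assms(1) by (simp add: Collect_conj_eq Int_commute)
  moreover have "card {y\<in>B. R x y} = (\<Sum>y\<in>B. of_bool (R x y))" for x
    using assms(2) by (simp add: Collect_conj_eq Int_commute)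
  moreover have "(\<Sum>y\<in>B. \<Sum>x\<in>A. of_bool (R x y)) = (\<Sum>x\<in>A. \<Sum>y\<in>B. of_bool (R x y) :: nat)"
    by (rule sum.swap)
  ultimately show ?thesis by simp
qed

lemma sum_card_adjacent_first_block:
  assumes pco: "partial_circ_ordering X D" and n3: "card X \<ge> 3" and D2: "2 \<le> length D"
  shows "(\<Sum>y\<in>(\<Union>q\<in>{1..<length D}. endpoints (D!q)).
            card {c \<in> consistent_orderings X D. adjacent_circ c (last (D!0)) y}) * card {D!0, rev (D!0)}
         = 2 * card (consistent_orderings X D)"
proof -
  let ?E = "\<Union>q\<in>{1..<length D}. endpoints (D!q)" and ?O = "consistent_orderings X D"
  have fin: "finite ?E" "finite ?O"
    using finite_consistent_orderings[OF pco_finite[OF pco]] by (auto simp: endpoints_def)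
  have D0: "0 < length D" using D2 by linarith
  then have D0_mem: "D!0 \<in> set D" by (rule nth_mem)
  have "card {y \<in> ?E. adjacent_circ c (last (D!0)) y} * card {D!0, rev (D!0)} = 2"
    if "c \<in> ?O" for c
    using card_adjacent_outside_block[OF pco n3 D2 that D0_mem] adjacent_outside_first_block[OF pco n3 that D0]
    by simp
  then show ?thesis
    unfolding sum_card_swap[OF fin(2,1)] sum_distrib_right by simp
qed

lemma sum_endpoints_nth:
  assumes pco: "partial_circ_ordering X D" and Q: "Q \<subseteq> {..<length D}"
  shows "(\<Sum>y\<in>(\<Union>q\<in>Q. endpoints (D!q)). f y) = (\<Sum>q\<in>Q. \<Sum>y\<in>{D!q, rev (D!q)}. f (hd y))"
proof -
  have "(\<Sum>y\<in>(\<Union>q\<in>Q. endpoints (D!q)). f y) = (\<Sum>q\<in>Q. \<Sum>y\<in>endpoints (D!q). f y)"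
  proof (rule sum.UNION_disjoint)
    show "finite Q" using Q finite_subset by blast
    show "\<forall>q\<in>Q. finite (endpoints (D!q))" by (simp add: endpoints_def)
    show "\<forall>q\<in>Q. \<forall>q'\<in>Q. q \<noteq> q' \<longrightarrow> endpoints (D!q) \<inter> endpoints (D!q') = {}"
    proof (intro ballI impI)
      fix q q' assume "q \<in> Q" "q' \<in> Q" "q \<noteq> q'"
      then have "q < length D" "q' < length D" using Q by auto
      then have "set (D!q) \<inter> set (D!q') = {}"
        using pco_blocks_disjoint[OF pco, of "D!q" "D!q'"] pco_nth_eq_iff[OF pco, of q q'] \<open>q \<noteq> q'\<close>
        by simp
      then show "endpoints (D!q) \<inter> endpoints (D!q') = {}"
        using endpoints_subset[of "D!q"] endpoints_subset[of "D!q'"] by blast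
    qed
  qed
  also have "\<dots> = (\<Sum>q\<in>Q. \<Sum>y\<in>{D!q, rev (D!q)}. f (hd y))"
  proof (rule sum.cong)
    fix q assume "q \<in> Q"
    then have "D!q \<in> set D" using Q by auto
    then have "D!q \<noteq> []" "distinct (D!q)" using pco_block[OF pco] by auto
    then show "(\<Sum>y\<in>endpoints (D!q). f y) = (\<Sum>y\<in>{D!q, rev (D!q)}. f (hd y))"
      unfolding endpoints_eq_hd_image[OF \<open>D!q \<noteq> []\<close>]
        sum.reindex[OF inj_on_hd_orientations[OF \<open>distinct (D!q)\<close>]] comp_def by simp
  qed simp
  finally show ?thesis .
qed

lemma card_consistent_orderings_step:
  assumes pco: "partial_circ_ordering X D" and n3: "card X \<ge> 3" and D2: "2 \<le> length D"
    and IH: "\<And>J. partial_circ_ordering X J \<Longrightarrow> length J = length D - 1 \<Longrightarrow>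
      2 * card (consistent_orderings X J) = F * num_orientations J"
  shows "2 * card (consistent_orderings X D) = (length D - 1) * F * num_orientations D"
proof -
  let ?O = "consistent_orderings X D" and ?P = "D!0"
  let ?f = "\<lambda>y. card {c \<in> ?O. adjacent_circ c (last ?P) y}"
  let ?or = "\<lambda>b. card {b, rev b}"
  have per_block: "(\<Sum>y\<in>{D!q, rev (D!q)}. ?f (hd y)) * ?or ?P = F * num_orientations D"
    if q: "q \<in> {1..<length D}" for q
  proof -
    have kl: "0 < length D" "q < length D" "0 \<noteq> q" using q by auto
    have "distinct (D!q)" using pco_block(2)[OF pco] kl(2) by simp
    then have orq: "?or (D!q) \<noteq> 0" by (simp add: card_orientations)
    have "?f (hd y) * ?or ?P * ?or (D!q) = F * num_orientations D" if y: "y \<in> {D!q, rev (D!q)}" for y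
      using card_adjacent_join_oriented[OF pco kl _ y IH[OF pco_join_oriented length_join_oriented]]
        pco kl y by simp
    then have "(\<Sum>y\<in>{D!q, rev (D!q)}. ?f (hd y)) * ?or ?P * ?or (D!q)
        = (\<Sum>y\<in>{D!q, rev (D!q)}. F * num_orientations D)"
      unfolding sum_distrib_right by (intro sum.cong) simp_all
    also have "\<dots> = F * num_orientations D * ?or (D!q)" by simp
    finally show ?thesis using orq by simp
  qed
  have "2 * card ?O = (\<Sum>y\<in>(\<Union>q\<in>{1..<length D}. endpoints (D!q)). ?f y) * ?or ?P"
    using sum_card_adjacent_first_block[OF pco n3 D2] by simp
  also have "\<dots> = (\<Sum>q\<in>{1..<length D}. (\<Sum>y\<in>{D!q, rev (D!q)}. ?f (hd y)) * ?or ?P)"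
    using sum_endpoints_nth[OF pco, of "{1..<length D}"] by (simp add: subset_iff sum_distrib_right)
  also have "\<dots> = (length D - 1) * F * num_orientations D"
    using per_block by simp
  finally show ?thesis .
qed

theorem card_consistent_orderings:
  assumes "partial_circ_ordering X D" "card X \<ge> 3" "D \<noteq> []"
  shows "2 * card (consistent_orderings X D) = fact (length D - 1) * num_orientations D"
proof -
  have "2 * card (consistent_orderings X D) = fact p * num_orientations D"
    if "length D = Suc p" "partial_circ_ordering X D" for p and D :: "'a list list"
    using that
  proof (induction p arbitrary: D)
    case 0
    then obtain b where D: "D = [b]" by (cases D) auto
    then have "set b = X" "distinct b" using "0.prems"(2) unfolding partial_circ_ordering_def by auto
    then have "2 \<le> length b" using assms(2) distinct_card by fastforce
    then have "num_orientations D = 2"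
      using card_orientations[OF \<open>distinct b\<close>] unfolding num_orientations_def D by simp
    then show ?case
      using consistent_orderings_single_block[OF "0.prems"(2)[unfolded D] assms(2)] D by simp
  next
    case (Suc p)
    then show ?case
      using card_consistent_orderings_step[OF Suc.prems(2) assms(2), of "fact p"] by simp
  qed
  then show ?thesis using assms by (cases D) auto
qed

definition block_weight :: "'a list \<Rightarrow> 'a \<Rightarrow> real" where
  "block_weight b i = (if i \<in> endpoints b then 1 / card {b, rev b} else 0)"

lemma tsp_weight_eq_block_weight:
  assumes pco: "partial_circ_ordering X D" and b: "b \<in> set D" and i: "i \<in> set b"
  shows "tsp_weight D i = block_weight b i"
proof (cases "2 \<le> length b")
  case False
  then obtain z where "b = [z]" using i by (cases b) (auto simp: Suc_le_eq)
  then have "b = [i]" using i by simp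
  then show ?thesis unfolding tsp_weight_def block_weight_def endpoints_def using b by auto
next
  case True
  have b_ne: "b \<noteq> []" and db: "distinct b" using pco_block[OF pco b] by auto
  have not_single: "\<not> (\<exists>b'\<in>set D. b' = [i])"
    using pco_same_block[OF pco b _ i, of "[i]"] True by auto
  have "card (endpoints b) = 2" using card_endpoints[OF b_ne db] card_orientations[OF db] True by simp
  then have "(\<exists>b'\<in>set D. i \<in> endpoints b' \<and> card (endpoints b') = 2) \<longleftrightarrow> i \<in> endpoints b"
  proof (intro iffI)
    assume "\<exists>b'\<in>set D. i \<in> endpoints b' \<and> card (endpoints b') = 2"
    then obtain b' where b': "b' \<in> set D" "i \<in> endpoints b'" by blast
    then have "i \<in> set b'" using endpoints_subset[of b'] by blast
    then have "b = b'" using pco_same_block[OF pco b b'(1) i] by blast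
    then show "i \<in> endpoints b" using b'(2) by simp
  qed (use b in blast)
  then show ?thesis
    unfolding tsp_weight_def block_weight_def using not_single card_orientations[OF db] True by simp
qed

lemma card_adjacent_circ_other_blocks:
  assumes pco: "partial_circ_ordering X D" and n3: "card X \<ge> 3" and D2: "2 \<le> length D"
    and b: "b \<in> set D" "b' \<in> set D" "b \<noteq> b'" and i: "i \<in> set b" and j: "j \<in> set b'"
  shows "real (card {c \<in> consistent_orderings X D. adjacent_circ c i j}) * (real (length D) - 1)
    = 2 * real (card (consistent_orderings X D)) * tsp_weight D i * tsp_weight D j"
proof -
  let ?O = "consistent_orderings X D" and ?or = "\<lambda>b. card {b, rev b}"
  obtain k l where kl: "k < length D" "l < length D" and bk: "b = D!k" "b' = D!l"
    using b(1,2) by (metis in_set_conv_nth)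
  then have "k \<noteq> l" using b(3) by auto
  have weights: "tsp_weight D i = block_weight b i" "tsp_weight D j = block_weight b' j"
    using tsp_weight_eq_block_weight[OF pco b(1) i] tsp_weight_eq_block_weight[OF pco b(2) j] .
  show ?thesis
  proof (cases "i \<in> endpoints b \<and> j \<in> endpoints b'")
    case False
    have "i \<in> endpoints b" "j \<in> endpoints b'" if "adjacent_circ c i j" "c \<in> ?O" for c
      using adjacent_circ_other_block[OF pco n3 that(2) b i j that(1)]
        adjacent_circ_other_block[OF pco n3 that(2) b(2,1) b(3)[symmetric] j i]
        that(1) adjacent_circ_commute[of c i j] by auto
    then have "{c \<in> ?O. adjacent_circ c i j} = {}" using False by blast
    moreover have "block_weight b i * block_weight b' j = 0"
      using False unfolding block_weight_def by auto
    ultimately show ?thesis unfolding weights by (simp only: card.empty of_nat_0 mult_zero_left mult.assoc mult_zero_right)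
  next
    case True
    have b_ne: "b \<noteq> []" "b' \<noteq> []" and db: "distinct b" "distinct b'"
      using pco_block[OF pco b(1)] pco_block[OF pco b(2)] by auto
    obtain x where x: "x \<in> {D!k, rev (D!k)}" "last x = i"
      using True endpoints_eq_last_image[OF b_ne(1)] bk(1) by auto
    obtain y where y: "y \<in> {D!l, rev (D!l)}" "hd y = j"
      using True endpoints_eq_hd_image[OF b_ne(2)] bk(2) by auto
    have "length (join_oriented D k l x y) - 1 = length D - 2"
      using length_join_oriented[OF pco kl \<open>k \<noteq> l\<close> x(1) y(1)] by simp
    then have join: "card {c \<in> ?O. adjacent_circ c i j} * ?or b * ?or b' = fact (length D - 2) * num_orientations D"
      using card_adjacent_join_oriented[OF pco kl \<open>k \<noteq> l\<close> x(1) y(1)]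
        card_consistent_orderings[OF pco_join_oriented[OF pco kl \<open>k \<noteq> l\<close> x(1) y(1)] n3]
      unfolding bk x(2) y(2) by (simp add: join_oriented_def)
    have "D \<noteq> []" using D2 by auto
    then have count: "2 * card ?O = fact (length D - 1) * num_orientations D"
      by (rule card_consistent_orderings[OF pco n3])
    have "length D - 1 = Suc (length D - 2)" using D2 by simp
    then have "fact (length D - 1) = (length D - 1) * fact (length D - 2)"
      by (simp only: fact_Suc of_nat_id)
    with count have "card {c \<in> ?O. adjacent_circ c i j} * (length D - 1) * ?or b * ?or b' = 2 * card ?O"
      using join by (simp add: ac_simps)
    then have "real (card {c \<in> ?O. adjacent_circ c i j} * (length D - 1) * ?or b * ?or b')
        = real (2 * card ?O)"
      by (rule arg_cong)
    then have "real (card {c \<in> ?O. adjacent_circ c i j}) * real (length D - 1) * ?or b * ?or b'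
        = 2 * real (card ?O)"
      by (simp only: of_nat_mult of_nat_numeral)
    moreover have "real (length D - 1) = real (length D) - 1" using D2 by simp
    ultimately have "real (card {c \<in> ?O. adjacent_circ c i j}) * (real (length D) - 1) * ?or b * ?or b'
        = 2 * real (card ?O)"
      by simp
    moreover have "?or b \<noteq> 0" "?or b' \<noteq> 0" using card_orientations[OF db(1)] card_orientations[OF db(2)] by auto
    ultimately show ?thesis
      unfolding weights block_weight_def using True by (simp add: field_simps)
  qed
qed

lemma block_weight_append:
  assumes "x \<noteq> []" "y \<noteq> []" "distinct (x @ y)"
  shows "block_weight (x @ y) i = (if i = hd x \<or> i = last y then 1 / 2 else 0)"
proof -
  have "2 \<le> length (x @ y)" using assms(1,2) by (cases x; cases y) auto
  then have "card {x @ y, rev (x @ y)} = 2" using card_orientations[OF assms(3)] by simp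
  then show ?thesis unfolding block_weight_def endpoints_def using assms(1,2) by auto
qed

lemma card_orientations_eq:
  assumes inj: "inj_on f {b, rev b}" and img: "f ` {b, rev b} = endpoints b" and db: "distinct b"
  shows "real (card {x \<in> {b, rev b}. f x = i}) = card {b, rev b} * block_weight b i"
proof -
  have "card {x \<in> {b, rev b}. f x = i} = (if i \<in> endpoints b then 1 else 0)"
  proof (cases "i \<in> endpoints b")
    case True
    then have "i \<in> f ` {b, rev b}" using img by simp
    then obtain x where x: "x \<in> {b, rev b}" "f x = i" by blast
    have "x' = x" if "x' \<in> {b, rev b}" "f x' = i" for x'
      using inj_onD[OF inj, of x' x] that x by simp
    then have "{x \<in> {b, rev b}. f x = i} = {x}" using x by blast
    then show ?thesis using True by simp
  next
    case False
    then have "{x \<in> {b, rev b}. f x = i} = {}" using img by blast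
    then show ?thesis using False by simp
  qed
  moreover have "card {b, rev b} \<noteq> 0" using card_orientations[OF db] by simp
  ultimately show ?thesis unfolding block_weight_def by simp
qed

context
  fixes X :: "'a set" and Cs :: "'a list list" and r s m :: nat
  assumes pco: "partial_circ_ordering X Cs" and n3: "card X \<ge> 3" and len: "length Cs = m"
    and m3: "m \<ge> 3" and rs: "r < m" "s < m" "r \<noteq> s"
begin

abbreviation orientation_pairs :: "('a list \<times> 'a list) set" where
  "orientation_pairs \<equiv> {Cs!r, rev (Cs!r)} \<times> {Cs!s, rev (Cs!s)}"

lemma joined_blocks:
  "Cs!r \<in> set Cs" "Cs!s \<in> set Cs" "Cs!r \<noteq> Cs!s" "set (Cs!r) \<inter> set (Cs!s) = {}"
  "Cs!r \<noteq> []" "Cs!s \<noteq> []" "distinct (Cs!r)" "distinct (Cs!s)"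
proof -
  show rs_mem: "Cs!r \<in> set Cs" "Cs!s \<in> set Cs" using rs len by auto
  show "Cs!r \<noteq> Cs!s" using pco_nth_eq_iff[OF pco] rs len by simp
  then show "set (Cs!r) \<inter> set (Cs!s) = {}" using pco_blocks_disjoint[OF pco rs_mem] by blast
  show "Cs!r \<noteq> []" "Cs!s \<noteq> []" "distinct (Cs!r)" "distinct (Cs!s)"
    using pco_block[OF pco rs_mem(1)] pco_block[OF pco rs_mem(2)] by auto
qed

lemma pair_facts:
  assumes "(x, y) \<in> orientation_pairs"
  shows "r < length Cs" "s < length Cs" "r \<noteq> s" "x \<in> {Cs!r, rev (Cs!r)}" "y \<in> {Cs!s, rev (Cs!s)}"
  using assms rs len by auto

lemma consistent_orderings_join_eq:
  "consistent_orderings_join X Cs r s =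
    (\<Union>(x, y)\<in>orientation_pairs. {c \<in> consistent_orderings X Cs. adjacent_circ c (last x) (hd y)})"
proof -
  have "join_blocks Cs r s = (\<lambda>(x, y). join_oriented Cs r s x y) ` orientation_pairs"
    unfolding join_blocks_def join_oriented_def other_blocks_def by auto
  then have "consistent_orderings_join X Cs r s =
      (\<Union>(x, y)\<in>orientation_pairs. consistent_orderings X (join_oriented Cs r s x y))"
    unfolding consistent_orderings_join_def by (simp add: image_image case_prod_beta)
  also have "\<dots> = (\<Union>(x, y)\<in>orientation_pairs.
      {c \<in> consistent_orderings X Cs. adjacent_circ c (last x) (hd y)})"
  proof (rule SUP_cong[OF refl])
    fix p assume "p \<in> orientation_pairs"
    then show "(case p of (x, y) \<Rightarrow> consistent_orderings X (join_oriented Cs r s x y)) =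
        (case p of (x, y) \<Rightarrow> {c \<in> consistent_orderings X Cs. adjacent_circ c (last x) (hd y)})"
      using consistent_orderings_join_oriented[OF pco pair_facts] by (cases p) simp
  qed
  finally show ?thesis .
qed

lemma junction_unique:
  assumes xy: "(x, y) \<in> orientation_pairs" and xy': "(x', y') \<in> orientation_pairs"
    and c: "c \<in> consistent_orderings X Cs"
    and adj: "adjacent_circ c (last x) (hd y)" and adj': "adjacent_circ c (last x') (hd y')"
  shows "x' = x \<and> y' = y"
proof -
  let ?J = "join_oriented Cs r s x y"
  have pJ: "partial_circ_ordering X ?J" using pco_join_oriented[OF pco pair_facts[OF xy]] .
  have cJ: "c \<in> consistent_orderings X ?J"
    using consistent_orderings_join_oriented[OF pco pair_facts[OF xy]] c adj by simp
  have "length ?J = m - 1" using length_join_oriented[OF pco pair_facts[OF xy]] len by simp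
  then have J2: "2 \<le> length ?J" using m3 by simp
  have L: "x @ y \<in> set ?J" by (simp add: join_oriented_def)
  have sets: "set x = set (Cs!r)" "set y = set (Cs!s)" "set x' = set (Cs!r)" "set y' = set (Cs!s)"
    using xy xy' by auto
  have "x' \<noteq> []" "y' \<noteq> []" using xy' joined_blocks(5,6) by auto
  then have mem: "last x' \<in> set x" "hd y' \<in> set y" using sets by auto
  then have "consec_in_block (x @ y) (last x') (hd y')"
    using adjacent_circ_same_block[OF pJ n3 J2 cJ L _ _ adj'] by simp
  then have "last x' = last x" "hd y' = hd y"
    using consec_in_block_append_across[of x y] mem sets joined_blocks(4) by simp_all
  then show ?thesis
    using inj_onD[OF inj_on_last_orientations[OF joined_blocks(7)] _ pair_facts(4)[OF xy'] pair_facts(4)[OF xy]]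
      inj_onD[OF inj_on_hd_orientations[OF joined_blocks(8)] _ pair_facts(5)[OF xy'] pair_facts(5)[OF xy]]
    by blast
qed



lemma card_join_filter:
  "card {c \<in> consistent_orderings_join X Cs r s. P c} = (\<Sum>p\<in>orientation_pairs.
      card {c \<in> consistent_orderings X Cs. adjacent_circ c (last (fst p)) (hd (snd p)) \<and> P c})"
proof -
  let ?A = "\<lambda>p. {c \<in> consistent_orderings X Cs. adjacent_circ c (last (fst p)) (hd (snd p)) \<and> P c}"
  have eq: "{c \<in> consistent_orderings_join X Cs r s. P c} = (\<Union>p\<in>orientation_pairs. ?A p)"
    unfolding consistent_orderings_join_eq by auto
  have "card (\<Union>p\<in>orientation_pairs. ?A p) = (\<Sum>p\<in>orientation_pairs. card (?A p))"
  proof (rule card_UN_disjoint)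
    show "finite orientation_pairs" by simp
    show "\<forall>p\<in>orientation_pairs. finite (?A p)"
      using finite_consistent_orderings[OF pco_finite[OF pco]] by simp
    show "\<forall>p\<in>orientation_pairs. \<forall>p'\<in>orientation_pairs. p \<noteq> p' \<longrightarrow> ?A p \<inter> ?A p' = {}"
    proof (intro ballI impI)
      fix p p' assume p: "p \<in> orientation_pairs" "p' \<in> orientation_pairs" "p \<noteq> p'"
      obtain x y x' y' where xy: "p = (x, y)" "p' = (x', y')" by (cases p, cases p')
      show "?A p \<inter> ?A p' = {}"
      proof (rule ccontr)
        assume "?A p \<inter> ?A p' \<noteq> {}"
        then obtain c where "c \<in> consistent_orderings X Cs"
          "adjacent_circ c (last x) (hd y)" "adjacent_circ c (last x') (hd y')"
          unfolding xy by auto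
        then have "x' = x \<and> y' = y"
          using junction_unique p(1,2)[unfolded xy] by blast
        then show False using p(3) xy by simp
      qed
    qed
  qed
  then show ?thesis unfolding eq .
qed

lemma card_junction:
  assumes xy: "(x, y) \<in> orientation_pairs"
  shows "real (card {c \<in> consistent_orderings X Cs. adjacent_circ c (last x) (hd y)}) * (real m - 1)
      * card {Cs!r, rev (Cs!r)} * card {Cs!s, rev (Cs!s)} = 2 * real (card (consistent_orderings X Cs))"
proof -
  have ends: "last x \<in> endpoints (Cs!r)" "hd y \<in> endpoints (Cs!s)"
    using xy endpoints_eq_last_image[OF joined_blocks(5)] endpoints_eq_hd_image[OF joined_blocks(6)]
    by auto
  then have mem: "last x \<in> set (Cs!r)" "hd y \<in> set (Cs!s)"
    using endpoints_subset[of "Cs!r"] endpoints_subset[of "Cs!s"] by blast+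
  let ?O = "consistent_orderings X Cs" and ?or = "\<lambda>b. real (card {b, rev b})"
  have w: "tsp_weight Cs (last x) * ?or (Cs!r) = 1" "tsp_weight Cs (hd y) * ?or (Cs!s) = 1"
    using tsp_weight_eq_block_weight[OF pco joined_blocks(1) mem(1)]
      tsp_weight_eq_block_weight[OF pco joined_blocks(2) mem(2)] ends
      card_orientations[OF joined_blocks(7)] card_orientations[OF joined_blocks(8)]
    unfolding block_weight_def by auto
  have "2 \<le> length Cs" using len m3 by simp
  then have "real (card {c \<in> ?O. adjacent_circ c (last x) (hd y)}) * (real m - 1)
      = 2 * real (card ?O) * tsp_weight Cs (last x) * tsp_weight Cs (hd y)"
    using card_adjacent_circ_other_blocks[OF pco n3 _ joined_blocks(1-3) mem] len by simp
  then have "real (card {c \<in> ?O. adjacent_circ c (last x) (hd y)}) * (real m - 1) * ?or (Cs!r) * ?or (Cs!s)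
      = 2 * real (card ?O) * (tsp_weight Cs (last x) * ?or (Cs!r)) * (tsp_weight Cs (hd y) * ?or (Cs!s))"
    by (simp only: ac_simps)
  then show ?thesis unfolding w by simp
qed

lemma card_consistent_orderings_join:
  "real (card (consistent_orderings_join X Cs r s)) * (real m - 1) = 2 * real (card (consistent_orderings X Cs))"
proof -
  let ?O = "consistent_orderings X Cs" and ?or = "\<lambda>b. real (card {b, rev b})"
  let ?A = "\<lambda>p. {c \<in> ?O. adjacent_circ c (last (fst p)) (hd (snd p))}"
  define K where "K = 2 * real (card ?O) / (?or (Cs!r) * ?or (Cs!s))"
  have nz: "?or (Cs!r) * ?or (Cs!s) \<noteq> 0"
    using card_orientations[OF joined_blocks(7)] card_orientations[OF joined_blocks(8)] by auto
  have "card (consistent_orderings_join X Cs r s) = (\<Sum>p\<in>orientation_pairs. card (?A p))"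
    using card_join_filter[of "\<lambda>_. True"] by (simp only: simp_thms Collect_mem_eq)
  then have "real (card (consistent_orderings_join X Cs r s)) * (real m - 1) =
      (\<Sum>p\<in>orientation_pairs. real (card (?A p)) * (real m - 1))"
    by (simp only: of_nat_sum sum_distrib_right)
  also have "\<dots> = (\<Sum>p\<in>orientation_pairs. K)"
  proof (rule sum.cong[OF refl])
    fix p assume "p \<in> orientation_pairs"
    then have "real (card (?A p)) * (real m - 1) * (?or (Cs!r) * ?or (Cs!s)) = 2 * real (card ?O)"
      using card_junction[of "fst p" "snd p"] by (simp add: mult.assoc)
    then show "real (card (?A p)) * (real m - 1) = K"
      unfolding K_def using nz by (simp add: eq_divide_eq)
  qed
  also have "\<dots> = ?or (Cs!r) * ?or (Cs!s) * K"
    by (simp only: sum_constant card_cartesian_product of_nat_mult)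
  also have "\<dots> = 2 * real (card ?O)" unfolding K_def using nz by simp
  finally show ?thesis .
qed

lemma consistent_orderings_join_subset: "consistent_orderings_join X Cs r s \<subseteq> consistent_orderings X Cs"
  unfolding consistent_orderings_join_eq by auto

lemma adjacent_join_consec:
  assumes "consec_in_some_block Cs i j"
  shows "{c \<in> consistent_orderings_join X Cs r s. adjacent_circ c i j} = consistent_orderings_join X Cs r s"
  using consistent_orderings_join_subset assms unfolding consistent_orderings_def by blast

lemma adjacent_join_same_block:
  assumes t: "t < m" and ij: "i \<in> set (Cs!t)" "j \<in> set (Cs!t)" and nc: "\<not> consec_in_some_block Cs i j"
  shows "{c \<in> consistent_orderings_join X Cs r s. adjacent_circ c i j} = {}"
proof -
  have b: "Cs!t \<in> set Cs" using t len by simp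
  then have "\<not> consec_in_block (Cs!t) i j" using nc unfolding consec_in_some_block_def by blast
  moreover have "2 \<le> length Cs" using len m3 by simp
  ultimately show ?thesis
    using consistent_orderings_join_subset adjacent_circ_same_block[OF pco n3 _ _ b ij] by blast
qed

lemma adjacent_join_joined_blocks:
  assumes i: "i \<in> set (Cs!r)" and j: "j \<in> set (Cs!s)"
  shows "{c \<in> consistent_orderings_join X Cs r s. adjacent_circ c i j}
    = {c \<in> consistent_orderings X Cs. adjacent_circ c i j}"
proof (intro equalityI subsetI)
  fix c assume "c \<in> {c \<in> consistent_orderings X Cs. adjacent_circ c i j}"
  then have c: "c \<in> consistent_orderings X Cs" and adj: "adjacent_circ c i j" by auto
  have "i \<in> endpoints (Cs!r)"
    using adjacent_circ_other_block[OF pco n3 c joined_blocks(1-3) i j adj] .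
  then obtain x where x: "x \<in> {Cs!r, rev (Cs!r)}" "last x = i"
    using endpoints_eq_last_image[OF joined_blocks(5)] by auto
  have "j \<in> endpoints (Cs!s)"
    using adjacent_circ_other_block[OF pco n3 c joined_blocks(2,1) joined_blocks(3)[symmetric] j i]
      adj adjacent_circ_commute[of c i j] by simp
  then obtain y where y: "y \<in> {Cs!s, rev (Cs!s)}" "hd y = j"
    using endpoints_eq_hd_image[OF joined_blocks(6)] by auto
  have "c \<in> {c \<in> consistent_orderings X Cs. adjacent_circ c (last x) (hd y)}"
    using c adj x(2) y(2) by simp
  then show "c \<in> {c \<in> consistent_orderings_join X Cs r s. adjacent_circ c i j}"
    using x(1) y(1) adj unfolding consistent_orderings_join_eq by blast
qed (use consistent_orderings_join_subset in blast)

lemma tsp_weight_join_outside: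
  assumes "(x, y) \<in> orientation_pairs" and u: "u < m" "u \<notin> {r, s}" and i: "i \<in> set (Cs!u)"
  shows "Cs!u \<in> set (join_oriented Cs r s x y)"
    "tsp_weight (join_oriented Cs r s x y) i = tsp_weight Cs i"
proof -
  show J: "Cs!u \<in> set (join_oriented Cs r s x y)"
    using set_join_oriented[OF pco pair_facts[OF assms(1)]] u len by auto
  have "Cs!u \<in> set Cs" using u len by simp
  then show "tsp_weight (join_oriented Cs r s x y) i = tsp_weight Cs i"
    using tsp_weight_eq_block_weight[OF pco_join_oriented[OF pco pair_facts[OF assms(1)]] J i]
      tsp_weight_eq_block_weight[OF pco _ i] by simp
qed

lemma tsp_weight_join_joined:
  assumes xy: "(x, y) \<in> orientation_pairs" and i: "i \<in> set (Cs!r) \<union> set (Cs!s)"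
  shows "tsp_weight (join_oriented Cs r s x y) i =
    (if i = hd x \<and> i \<in> set (Cs!r) \<or> i = last y \<and> i \<in> set (Cs!s) then 1 / 2 else 0)"
proof -
  have ne: "x \<noteq> []" "y \<noteq> []" and sets: "set x = set (Cs!r)" "set y = set (Cs!s)"
    using xy joined_blocks(5,6) by auto
  have L: "x @ y \<in> set (join_oriented Cs r s x y)" by (simp add: join_oriented_def)
  then have "distinct (x @ y)"
    using pco_block(2)[OF pco_join_oriented[OF pco pair_facts[OF xy]]] by blast
  moreover have "i \<in> set (x @ y)" using i sets by auto
  ultimately have "tsp_weight (join_oriented Cs r s x y) i = (if i = hd x \<or> i = last y then 1 / 2 else 0)"
    using tsp_weight_eq_block_weight[OF pco_join_oriented[OF pco pair_facts[OF xy]] L]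
      block_weight_append[OF ne] by simp
  moreover have "hd x \<in> set (Cs!r)" "last y \<in> set (Cs!s)" using ne sets by auto
  ultimately show ?thesis using i joined_blocks(4) by auto
qed

lemma sum_if_eq_card: "finite A \<Longrightarrow> (\<Sum>x\<in>A. if P x then c else 0) = of_nat (card {x\<in>A. P x}) * c"
  by (simp add: sum.inter_filter[symmetric])

lemma sum_tsp_weight_join:
  assumes i: "i \<in> X"
  shows "(\<Sum>p\<in>orientation_pairs. tsp_weight (join_oriented Cs r s (fst p) (snd p)) i)
    = real (card {Cs!r, rev (Cs!r)}) * real (card {Cs!s, rev (Cs!s)}) * tsp_weight Cs i
      * (if i \<in> set (Cs!r) \<union> set (Cs!s) then 1 / 2 else 1)"
proof -
  let ?or = "\<lambda>b. real (card {b, rev b})"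
  consider "i \<in> set (Cs!r)" | "i \<in> set (Cs!s)" | "i \<notin> set (Cs!r) \<union> set (Cs!s)" by blast
  then show ?thesis
  proof cases
    case 1
    then have "i \<notin> set (Cs!s)" using joined_blocks(4) by blast
    then have "(\<Sum>p\<in>orientation_pairs. tsp_weight (join_oriented Cs r s (fst p) (snd p)) i)
        = (\<Sum>x\<in>{Cs!r, rev (Cs!r)}. \<Sum>y\<in>{Cs!s, rev (Cs!s)}. if hd x = i then 1 / 2 else 0)"
      unfolding sum.cartesian_product' using tsp_weight_join_joined 1 by (intro sum.cong) auto
    also have "\<dots> = ?or (Cs!s) * card {x \<in> {Cs!r, rev (Cs!r)}. hd x = i} / 2"
      by (simp add: sum_distrib_left[symmetric] sum_if_eq_card)
    also have "\<dots> = ?or (Cs!r) * ?or (Cs!s) * tsp_weight Cs i / 2"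
      using card_orientations_eq[OF inj_on_hd_orientations endpoints_eq_hd_image[symmetric]]
        joined_blocks(5,7) tsp_weight_eq_block_weight[OF pco joined_blocks(1) 1] by simp
    finally show ?thesis using 1 by simp
  next
    case 2
    then have "i \<notin> set (Cs!r)" using joined_blocks(4) by blast
    then have "(\<Sum>p\<in>orientation_pairs. tsp_weight (join_oriented Cs r s (fst p) (snd p)) i)
        = (\<Sum>x\<in>{Cs!r, rev (Cs!r)}. \<Sum>y\<in>{Cs!s, rev (Cs!s)}. if last y = i then 1 / 2 else 0)"
      unfolding sum.cartesian_product' using tsp_weight_join_joined 2 by (intro sum.cong) auto
    also have "\<dots> = ?or (Cs!r) * card {y \<in> {Cs!s, rev (Cs!s)}. last y = i} / 2"
      by (simp add: sum_if_eq_card)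
    also have "\<dots> = ?or (Cs!r) * ?or (Cs!s) * tsp_weight Cs i / 2"
      using card_orientations_eq[OF inj_on_last_orientations endpoints_eq_last_image[symmetric]]
        joined_blocks(6,8) tsp_weight_eq_block_weight[OF pco joined_blocks(2) 2] by simp
    finally show ?thesis using 2 by simp
  next
    case 3
    obtain u where u: "u < length Cs" "i \<in> set (Cs!u)" using pco_obtain_block[OF pco i] .
    then have "u \<notin> {r, s}" "u < m" using 3 len by auto
    then have "(\<Sum>p\<in>orientation_pairs. tsp_weight (join_oriented Cs r s (fst p) (snd p)) i)
        = (\<Sum>p\<in>orientation_pairs. tsp_weight Cs i)"
      using tsp_weight_join_outside(2) u(2) by (intro sum.cong) auto
    also have "\<dots> = ?or (Cs!r) * ?or (Cs!s) * tsp_weight Cs i"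
      by (simp only: sum_constant card_cartesian_product of_nat_mult)
    finally show ?thesis using 3 by (simp only: if_False mult_1_right)
  qed
qed

lemma card_junction_adjacent:
  assumes xy: "(x, y) \<in> orientation_pairs" and t: "t < m" "t \<notin> {r, s}" and j: "j \<in> set (Cs!t)"
    and i: "i \<in> X" "i \<notin> set (Cs!t)"
  shows "real (card {c \<in> consistent_orderings X Cs. adjacent_circ c (last x) (hd y) \<and> adjacent_circ c i j})
      * ((real m - 1) * (real m - 2)) * (card {Cs!r, rev (Cs!r)} * card {Cs!s, rev (Cs!s)})
    = 4 * real (card (consistent_orderings X Cs)) * tsp_weight (join_oriented Cs r s x y) i * tsp_weight Cs j"
proof -
  let ?O = "consistent_orderings X Cs" and ?or = "\<lambda>b. real (card {b, rev b})"
  let ?J = "join_oriented Cs r s x y" and ?A = "{c \<in> ?O. adjacent_circ c (last x) (hd y)}"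
  note facts = pair_facts[OF xy]
  have pJ: "partial_circ_ordering X ?J" using pco_join_oriented[OF pco facts] .
  have "length ?J = m - 1" using length_join_oriented[OF pco facts] len by simp
  then have J2: "2 \<le> length ?J" and lenJ: "real (length ?J) - 1 = real m - 2"
    using m3 by (auto simp: of_nat_diff)
  have oJ: "consistent_orderings X ?J = ?A" using consistent_orderings_join_oriented[OF pco facts] .
  have tJ: "Cs!t \<in> set ?J" "tsp_weight ?J j = tsp_weight Cs j"
    using tsp_weight_join_outside[OF xy t j] by auto
  obtain q where q: "q < length ?J" "i \<in> set (?J ! q)" using pco_obtain_block[OF pJ i(1)] .
  then have b: "?J ! q \<in> set ?J" "?J ! q \<noteq> Cs!t" using i(2) by auto
  have setB: "{c \<in> consistent_orderings X ?J. adjacent_circ c i j}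
      = {c \<in> ?O. adjacent_circ c (last x) (hd y) \<and> adjacent_circ c i j}" unfolding oJ by auto
  have "real (card {c \<in> ?O. adjacent_circ c (last x) (hd y) \<and> adjacent_circ c i j}) * (real m - 2)
      = 2 * real (card ?A) * tsp_weight ?J i * tsp_weight Cs j"
    using card_adjacent_circ_other_blocks[OF pJ n3 J2 b(1) tJ(1) b(2) q(2) j]
    unfolding setB unfolding lenJ tJ(2) oJ .
  then have "real (card {c \<in> ?O. adjacent_circ c (last x) (hd y) \<and> adjacent_circ c i j})
      * ((real m - 1) * (real m - 2)) * (?or (Cs!r) * ?or (Cs!s))
      = 2 * tsp_weight ?J i * tsp_weight Cs j * (real (card ?A) * (real m - 1) * ?or (Cs!r) * ?or (Cs!s))"
    by (simp add: algebra_simps)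
  then show ?thesis using card_junction[OF xy] by simp
qed

lemma adjacent_join_other_block:
  assumes t: "t < m" "t \<notin> {r, s}" and j: "j \<in> set (Cs!t)" and i: "i \<in> X" "i \<notin> set (Cs!t)"
  shows "real (card {c \<in> consistent_orderings_join X Cs r s. adjacent_circ c i j}) * ((real m - 1) * (real m - 2))
    = 4 * real (card (consistent_orderings X Cs)) * tsp_weight Cs i * tsp_weight Cs j
      * (if i \<in> set (Cs!r) \<union> set (Cs!s) then 1 / 2 else 1)"
proof -
  let ?O = "consistent_orderings X Cs" and ?or = "\<lambda>b. real (card {b, rev b})"
  let ?J = "\<lambda>p. join_oriented Cs r s (fst p) (snd p)"
  let ?B = "\<lambda>p. {c \<in> ?O. adjacent_circ c (last (fst p)) (hd (snd p)) \<and> adjacent_circ c i j}"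
  have nz: "?or (Cs!r) * ?or (Cs!s) \<noteq> 0"
    using card_orientations[OF joined_blocks(7)] card_orientations[OF joined_blocks(8)] by auto
  have per_pair: "real (card (?B p)) * ((real m - 1) * (real m - 2)) * (?or (Cs!r) * ?or (Cs!s))
      = 4 * real (card ?O) * tsp_weight (?J p) i * tsp_weight Cs j" if "p \<in> orientation_pairs" for p
    using card_junction_adjacent[of "fst p" "snd p", OF _ t j i] that by simp
  have "real (card {c \<in> consistent_orderings_join X Cs r s. adjacent_circ c i j})
      * ((real m - 1) * (real m - 2)) * (?or (Cs!r) * ?or (Cs!s))
      = (\<Sum>p\<in>orientation_pairs. real (card (?B p)) * ((real m - 1) * (real m - 2)) * (?or (Cs!r) * ?or (Cs!s)))"
    unfolding card_join_filter by (simp only: of_nat_sum sum_distrib_right)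
  also have "\<dots> = 4 * real (card ?O) * tsp_weight Cs j * (\<Sum>p\<in>orientation_pairs. tsp_weight (?J p) i)"
    using per_pair by (simp add: sum_distrib_left mult_ac)
  also have "\<dots> = 4 * real (card ?O) * tsp_weight Cs i * tsp_weight Cs j
      * (if i \<in> set (Cs!r) \<union> set (Cs!s) then 1 / 2 else 1) * (?or (Cs!r) * ?or (Cs!s))"
    unfolding sum_tsp_weight_join[OF i(1)] by (simp only: mult_ac)
  finally show ?thesis using nz by simp
qed

lemma adjacent_join_commute:
  "{c \<in> consistent_orderings_join X Cs r s. adjacent_circ c i j}
    = {c \<in> consistent_orderings_join X Cs r s. adjacent_circ c j i}"
  by (simp add: adjacent_circ_commute[of _ i j])

lemma eta_joined_blocks:
  assumes "i \<in> set (Cs!r) \<and> j \<in> set (Cs!s) \<or> i \<in> set (Cs!s) \<and> j \<in> set (Cs!r)"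
  shows "real (card {c \<in> consistent_orderings_join X Cs r s. adjacent_circ c i j})
    = 2 * real (card (consistent_orderings X Cs)) * tsp_weight Cs i * tsp_weight Cs j / (real m - 1)"
proof -
  have key: "real (card {c \<in> consistent_orderings_join X Cs r s. adjacent_circ c i j}) * (real m - 1)
      = 2 * real (card (consistent_orderings X Cs)) * tsp_weight Cs i * tsp_weight Cs j"
    if "i \<in> set (Cs!r)" "j \<in> set (Cs!s)" for i j
    using card_adjacent_circ_other_blocks[OF pco n3 _ joined_blocks(1-3) that] len m3
    unfolding adjacent_join_joined_blocks[OF that] by simp
  have "real (card {c \<in> consistent_orderings_join X Cs r s. adjacent_circ c i j}) * (real m - 1)
      = 2 * real (card (consistent_orderings X Cs)) * tsp_weight Cs i * tsp_weight Cs j"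
    using assms
  proof (elim disjE conjE)
    assume "i \<in> set (Cs!s)" "j \<in> set (Cs!r)"
    then show ?thesis using key[of j i] unfolding adjacent_join_commute[of i j] by (simp add: mult_ac)
  qed (rule key)
  then show ?thesis using m3 by (simp add: eq_divide_eq)
qed

lemma eta_other_blocks:
  assumes "\<exists>t<m. \<exists>u<m. t \<noteq> u \<and> t \<notin> {r, s} \<and> u \<notin> {r, s} \<and> i \<in> set (Cs!t) \<and> j \<in> set (Cs!u)"
  shows "real (card {c \<in> consistent_orderings_join X Cs r s. adjacent_circ c i j})
    = 4 * real (card (consistent_orderings X Cs)) * tsp_weight Cs i * tsp_weight Cs j
      / ((real m - 1) * (real m - 2))"
proof -
  obtain t u where tu: "t < m" "u < m" "t \<noteq> u" "t \<notin> {r, s}" "u \<notin> {r, s}"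
    and ij: "i \<in> set (Cs!t)" "j \<in> set (Cs!u)" using assms by blast
  have "i \<in> X" using pco_block(3)[OF pco nth_mem[of t Cs]] ij(1) tu(1) len by auto
  moreover have "i \<notin> set (Cs!v)" if "v < m" "v \<noteq> t" for v
    using pco_blocks_disjoint[OF pco nth_mem nth_mem, of t v] pco_nth_eq_iff[OF pco, of t v] that tu(1) ij(1) len
    by auto
  then have "i \<notin> set (Cs!u)" "i \<notin> set (Cs!r) \<union> set (Cs!s)" using tu rs by auto
  then have "real (card {c \<in> consistent_orderings_join X Cs r s. adjacent_circ c i j})
      * ((real m - 1) * (real m - 2))
      = 4 * real (card (consistent_orderings X Cs)) * tsp_weight Cs i * tsp_weight Cs j"
    using adjacent_join_other_block[OF tu(2,5) ij(2) \<open>i \<in> X\<close>] by simp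
  moreover have "(real m - 1) * (real m - 2) \<noteq> 0" using m3 by simp
  ultimately show ?thesis by (simp add: eq_divide_eq)
qed

lemma eta_joined_and_other_block:
  assumes "\<exists>t<m. t \<notin> {r, s} \<and> (i \<in> set (Cs!r) \<union> set (Cs!s) \<and> j \<in> set (Cs!t)
      \<or> j \<in> set (Cs!r) \<union> set (Cs!s) \<and> i \<in> set (Cs!t))"
  shows "real (card {c \<in> consistent_orderings_join X Cs r s. adjacent_circ c i j})
    = 2 * real (card (consistent_orderings X Cs)) * tsp_weight Cs i * tsp_weight Cs j
      / ((real m - 1) * (real m - 2))"
proof -
  have key: "real (card {c \<in> consistent_orderings_join X Cs r s. adjacent_circ c i j})
      * ((real m - 1) * (real m - 2))
      = 2 * real (card (consistent_orderings X Cs)) * tsp_weight Cs i * tsp_weight Cs j"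
    if t: "t < m" "t \<notin> {r, s}" and i: "i \<in> set (Cs!r) \<union> set (Cs!s)" and j: "j \<in> set (Cs!t)" for t i j
  proof -
    have "i \<in> X" using i pco_block(3)[OF pco joined_blocks(1)] pco_block(3)[OF pco joined_blocks(2)] by blast
    moreover have "i \<notin> set (Cs!t)"
      using pco_blocks_disjoint[OF pco nth_mem nth_mem, of t r] pco_blocks_disjoint[OF pco nth_mem nth_mem, of t s]
        pco_nth_eq_iff[OF pco, of t r] pco_nth_eq_iff[OF pco, of t s] t rs i len by auto
    ultimately show ?thesis using adjacent_join_other_block[OF t j] i by simp
  qed
  obtain t where t: "t < m" "t \<notin> {r, s}" and ij: "i \<in> set (Cs!r) \<union> set (Cs!s) \<and> j \<in> set (Cs!t)
      \<or> j \<in> set (Cs!r) \<union> set (Cs!s) \<and> i \<in> set (Cs!t)" using assms by blast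
  have "real (card {c \<in> consistent_orderings_join X Cs r s. adjacent_circ c i j})
      * ((real m - 1) * (real m - 2))
      = 2 * real (card (consistent_orderings X Cs)) * tsp_weight Cs i * tsp_weight Cs j"
    using ij
  proof (elim disjE conjE)
    assume "j \<in> set (Cs!r) \<union> set (Cs!s)" "i \<in> set (Cs!t)"
    then show ?thesis using key[OF t] unfolding adjacent_join_commute[of i j] by (simp add: mult_ac)
  qed (rule key[OF t])
  moreover have "(real m - 1) * (real m - 2) \<noteq> 0" using m3 by simp
  ultimately show ?thesis by (simp add: eq_divide_eq)
qed

lemma eta_remaining_cases:
  assumes ij: "i \<in> X" "j \<in> X" and nc: "\<not> consec_in_some_block Cs i j"
    and n2: "\<not> (i \<in> set (Cs!r) \<and> j \<in> set (Cs!s) \<or> i \<in> set (Cs!s) \<and> j \<in> set (Cs!r))"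
    and n3': "\<not> (\<exists>t<m. \<exists>u<m. t \<noteq> u \<and> t \<notin> {r, s} \<and> u \<notin> {r, s} \<and> i \<in> set (Cs!t) \<and> j \<in> set (Cs!u))"
    and n4: "\<not> (\<exists>t<m. t \<notin> {r, s} \<and> (i \<in> set (Cs!r) \<union> set (Cs!s) \<and> j \<in> set (Cs!t)
      \<or> j \<in> set (Cs!r) \<union> set (Cs!s) \<and> i \<in> set (Cs!t)))"
  shows "{c \<in> consistent_orderings_join X Cs r s. adjacent_circ c i j} = {}"
proof -
  obtain t u where t: "t < m" "i \<in> set (Cs!t)" and u: "u < m" "j \<in> set (Cs!u)"
    using pco_obtain_block[OF pco ij(1)] pco_obtain_block[OF pco ij(2)] len by metis
  have "t = u"
  proof (rule ccontr)
    assume "t \<noteq> u"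
    then show False
      using n2 n3' n4 t u by (cases "t \<in> {r, s}"; cases "u \<in> {r, s}") blast+
  qed
  then show ?thesis using adjacent_join_same_block[OF t(1) t(2) _ nc] u(2) by simp
qed

end

theorem mainTheorem3:
  fixes n m r s :: nat and Cs :: "nat list list"
  defines "X \<equiv> {1..n}"
  defines "oC \<equiv> real (card (consistent_orderings X Cs))"
  defines "\<mu> \<equiv> tsp_weight Cs"
  defines "\<eta> \<equiv> \<lambda>i j. real (eta_join X Cs r s i j)"
  assumes n3: "n \<ge> 3"
    and pco: "partial_circ_ordering X Cs"
    and len: "length Cs = m"
    and m3: "m \<ge> 3"
    and rs: "r < m" "s < m" "r \<noteq> s"
  shows "real (card (consistent_orderings_join X Cs r s)) = 2 * oC / (real m - 1)
    \<and> (\<forall>i\<in>X. \<forall>j\<in>X. i \<noteq> j \<longrightarrow>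
        (if consec_in_some_block Cs i j then
           \<eta> i j = 2 * oC / (real m - 1)
         else if (i \<in> set (Cs ! r) \<and> j \<in> set (Cs ! s)) \<or> (i \<in> set (Cs ! s) \<and> j \<in> set (Cs ! r)) then
           \<eta> i j = 2 * oC * \<mu> i * \<mu> j / (real m - 1)
         else if (\<exists>t<m. \<exists>u<m. t \<noteq> u \<and> t \<notin> {r, s} \<and> u \<notin> {r, s}
                    \<and> i \<in> set (Cs ! t) \<and> j \<in> set (Cs ! u)) then
           \<eta> i j = 4 * oC * \<mu> i * \<mu> j / ((real m - 1) * (real m - 2))
         else if (\<exists>t<m. t \<notin> {r, s} \<and>
                    ((i \<in> set (Cs ! r) \<union> set (Cs ! s) \<and> j \<in> set (Cs ! t)) \<or>
                     (j \<in> set (Cs ! r) \<union> set (Cs ! s) \<and> i \<in> set (Cs ! t)))) then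
           \<eta> i j = 2 * oC * \<mu> i * \<mu> j / ((real m - 1) * (real m - 2))
         else \<eta> i j = 0))"
proof -
  have "card X \<ge> 3" using n3 by (simp add: X_def)
  note ctx = pco this len m3 rs
  have card_join: "real (card (consistent_orderings_join X Cs r s)) = 2 * oC / (real m - 1)"
    using card_consistent_orderings_join[OF ctx] m3 unfolding oC_def by (simp add: eq_divide_eq)
  have \<eta>_card: "\<eta> i j = real (card {c \<in> consistent_orderings_join X Cs r s. adjacent_circ c i j})" for i j
    unfolding \<eta>_def eta_join_def ..
  have card_join: "real (card (consistent_orderings_join X Cs r s)) = 2 * oC / (real m - 1)"
    using card_consistent_orderings_join[OF ctx] m3 unfolding oC_def by (simp add: eq_divide_eq)
  show ?thesis
    unfolding if_bool_eq_conj
  proof (intro conjI ballI impI card_join)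
    fix i j assume "consec_in_some_block Cs i j"
    then show "\<eta> i j = 2 * oC / (real m - 1)"
      using card_join adjacent_join_consec[OF ctx] unfolding \<eta>_card by simp
  next
    fix i j assume "i \<in> set (Cs ! r) \<and> j \<in> set (Cs ! s) \<or> i \<in> set (Cs ! s) \<and> j \<in> set (Cs ! r)"
    then show "\<eta> i j = 2 * oC * \<mu> i * \<mu> j / (real m - 1)"
      unfolding \<eta>_card oC_def \<mu>_def by (rule eta_joined_blocks[OF ctx])
  next
    fix i j assume "\<exists>t<m. \<exists>u<m. t \<noteq> u \<and> t \<notin> {r, s} \<and> u \<notin> {r, s} \<and> i \<in> set (Cs ! t) \<and> j \<in> set (Cs ! u)"
    then show "\<eta> i j = 4 * oC * \<mu> i * \<mu> j / ((real m - 1) * (real m - 2))"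
      unfolding \<eta>_card oC_def \<mu>_def by (rule eta_other_blocks[OF ctx])
  next
    fix i j assume "\<exists>t<m. t \<notin> {r, s} \<and> (i \<in> set (Cs ! r) \<union> set (Cs ! s) \<and> j \<in> set (Cs ! t)
      \<or> j \<in> set (Cs ! r) \<union> set (Cs ! s) \<and> i \<in> set (Cs ! t))"
    then show "\<eta> i j = 2 * oC * \<mu> i * \<mu> j / ((real m - 1) * (real m - 2))"
      unfolding \<eta>_card oC_def \<mu>_def by (rule eta_joined_and_other_block[OF ctx])
  qed (simp only: \<eta>_card eta_remaining_cases[OF ctx] card.empty of_nat_0 not_False_eq_True)
qed

end
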